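(* Assume each $K_n/k$ is a Galois extension and let $G=\mathrm{Gal}(K/k)$, acting on $K\subset\overline{K}$. Then for each $g\in G$ the map $g:K\to K\subset \overline{K}$ extends uniquely to a map $\overline{K}\to\overline{K}$ that is continuous with respect to the $*$-weak topology $\sigma(\overline{K},K)$ (the weakest topology making all functionals $y\mapsto\langle\xi,y\rangle$, $\xi\in K$, continuous), and these extensions define an action of $G$ on $\overline{K}$ by $*$-weakly continuous maps.
   Context: Let $k$ be a non-Archimedean local field of characteristic $0$, and let $k=K_1\subset K_2\subset\cdots$ be an increasing sequence of finite extensions, $K=\bigcup_n K_n$. Let $m_n=[K_n:k]$, $|\cdot|_n$ the normalized absolute value of $K_n$, $\|x\|=|x|_n^{1/m_n}$ for $x\in K_n$. For $n\le\nu$ and $x\in K_\nu$ put $T_n(x)=\frac{m_n}{m_\nu}\mathrm{Tr}_{K_\nu/K_n}(x)$ (independent of $\nu$); $T=T_1$. $\overline{K}$ is the set of sequences $y=(y_1,y_2,\dots)$, $y_n\in K_n$, with $y_n=T_n(y_\nu)$ for $\nu>n$, topologized by the seminorms $\|y\|_n=\|y_n\|$; $T_n(y):=y_n$, and $K$ is embedded in $\overline K$ via $x\mapsto(T_1(x),T_2(x),\dots)$. The pairing is $\langle\xi,y\rangle=T(\xi\,T_n(y))$ for $\xi\in K_n$, $y\in\overline{K}$. *)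

theory Defs
  imports "HOL-Analysis.Analysis"
begin

definition is_subfield :: "'a::field set \<Rightarrow> bool" where
  "is_subfield F \<longleftrightarrow> 0 \<in> F \<and> 1 \<in> F \<and>
     (\<forall>x\<in>F. \<forall>y\<in>F. x + y \<in> F \<and> x - y \<in> F \<and> x * y \<in> F) \<and>
     (\<forall>x\<in>F. x \<noteq> 0 \<longrightarrow> inverse x \<in> F)"

definition is_basis :: "'a::field set \<Rightarrow> 'a set \<Rightarrow> 'a list \<Rightarrow> bool" where
  "is_basis F L bs \<longleftrightarrow> set bs \<subseteq> L \<and>
     (\<forall>v\<in>L. \<exists>!c. (\<forall>i<length bs. c i \<in> F) \<and> (\<forall>i. length bs \<le> i \<longrightarrow> c i = 0) \<and>
                    v = (\<Sum>i<length bs. c i * bs ! i))"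

definition coords :: "'a::field set \<Rightarrow> 'a list \<Rightarrow> 'a \<Rightarrow> nat \<Rightarrow> 'a" where
  "coords F bs v = (THE c. (\<forall>i<length bs. c i \<in> F) \<and> (\<forall>i. length bs \<le> i \<longrightarrow> c i = 0) \<and>
                    v = (\<Sum>i<length bs. c i * bs ! i))"

definition finite_ext :: "'a::field set \<Rightarrow> 'a set \<Rightarrow> bool" where
  "finite_ext F L \<longleftrightarrow> is_subfield F \<and> is_subfield L \<and> F \<subseteq> L \<and> (\<exists>bs. is_basis F L bs)"

definition some_basis :: "'a::field set \<Rightarrow> 'a set \<Rightarrow> 'a list" where
  "some_basis F L = (SOME bs. is_basis F L bs)"

definition field_degree :: "'a::field set \<Rightarrow> 'a set \<Rightarrow> nat" where
  "field_degree F L = length (some_basis F L)"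

definition field_trace :: "'a::field set \<Rightarrow> 'a set \<Rightarrow> 'a \<Rightarrow> 'a" where
  "field_trace F L a = (let bs = some_basis F L in
      \<Sum>i<length bs. coords F bs (a * bs ! i) i)"

text \<open>Field automorphisms of L fixing F pointwise (only their values on L matter).\<close>
definition field_auts :: "'a::field set \<Rightarrow> 'a set \<Rightarrow> ('a \<Rightarrow> 'a) set" where
  "field_auts L F = {\<sigma>. bij_betw \<sigma> L L \<and> \<sigma> 1 = 1 \<and>
      (\<forall>x\<in>L. \<forall>y\<in>L. \<sigma> (x + y) = \<sigma> x + \<sigma> y \<and> \<sigma> (x * y) = \<sigma> x * \<sigma> y) \<and>
      (\<forall>x\<in>F. \<sigma> x = x)}"

definition galois_ext :: "'a::field set \<Rightarrow> 'a set \<Rightarrow> bool" where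
  "galois_ext F L \<longleftrightarrow> finite_ext F L \<and> {x\<in>L. \<forall>\<sigma>\<in>field_auts L F. \<sigma> x = x} = F"

definition nonarch_abs :: "'a::field set \<Rightarrow> ('a \<Rightarrow> real) \<Rightarrow> bool" where
  "nonarch_abs F av \<longleftrightarrow>
     (\<forall>x\<in>F. av x \<ge> 0 \<and> (av x = 0 \<longleftrightarrow> x = 0)) \<and>
     (\<forall>x\<in>F. \<forall>y\<in>F. av (x * y) = av x * av y \<and> av (x + y) \<le> max (av x) (av y))"

text \<open>F with the absolute value av is a non-Archimedean local field: the absolute value is
  non-Archimedean and nontrivial, F is complete, and the closed unit ball is (sequentially)
  compact, i.e. F is locally compact.\<close>
definition nonarch_local_field :: "'a::field set \<Rightarrow> ('a \<Rightarrow> real) \<Rightarrow> bool" where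
  "nonarch_local_field F av \<longleftrightarrow> is_subfield F \<and> nonarch_abs F av \<and>
     (\<exists>x\<in>F. av x \<noteq> 0 \<and> av x \<noteq> 1) \<and>
     (\<forall>s. (\<forall>j. s j \<in> F) \<longrightarrow> (\<forall>e>0. \<exists>N. \<forall>i\<ge>N. \<forall>j\<ge>N. av (s i - s j) < e) \<longrightarrow>
          (\<exists>L\<in>F. (\<lambda>j. av (s j - L)) \<longlonglongrightarrow> 0)) \<and>
     (\<forall>s. (\<forall>j. s j \<in> F \<and> av (s j) \<le> 1) \<longrightarrow>
          (\<exists>r L. strict_mono (r :: nat \<Rightarrow> nat) \<and> L \<in> F \<and> (\<lambda>j. av (s (r j) - L)) \<longlonglongrightarrow> 0))"

definition abs_topology :: "'a::field set \<Rightarrow> ('a \<Rightarrow> real) \<Rightarrow> 'a topology" where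
  "abs_topology F av = topology (\<lambda>U. U \<subseteq> F \<and>
      (\<forall>x\<in>U. \<exists>e>0. \<forall>y\<in>F. av (y - x) < e \<longrightarrow> y \<in> U))"

text \<open>Indices are shifted by one: Kt 0 = k is the paper's K_1, and Kt n is K_{n+1}.\<close>

definition tower_union :: "(nat \<Rightarrow> 'a set) \<Rightarrow> 'a set" where
  "tower_union Kt = (\<Union>n. Kt n)"

definition Tnu :: "(nat \<Rightarrow> 'a::field set) \<Rightarrow> nat \<Rightarrow> nat \<Rightarrow> 'a \<Rightarrow> 'a" where
  "Tnu Kt n \<nu> x = (of_nat (field_degree (Kt 0) (Kt n)) / of_nat (field_degree (Kt 0) (Kt \<nu>)))
                    * field_trace (Kt n) (Kt \<nu>) x"

text \<open>T_n on K, using the least admissible \<nu> (the value is independent of \<nu>).\<close>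
definition Tn :: "(nat \<Rightarrow> 'a::field set) \<Rightarrow> nat \<Rightarrow> 'a \<Rightarrow> 'a" where
  "Tn Kt n x = Tnu Kt n (LEAST \<nu>. n \<le> \<nu> \<and> x \<in> Kt \<nu>) x"

definition Kbar :: "(nat \<Rightarrow> 'a::field set) \<Rightarrow> (nat \<Rightarrow> 'a) set" where
  "Kbar Kt = {y. (\<forall>n. y n \<in> Kt n) \<and> (\<forall>n \<nu>. n < \<nu> \<longrightarrow> y n = Tnu Kt n \<nu> (y \<nu>))}"

definition embK :: "(nat \<Rightarrow> 'a::field set) \<Rightarrow> 'a \<Rightarrow> (nat \<Rightarrow> 'a)" where
  "embK Kt x = (\<lambda>n. Tn Kt n x)"

text \<open>The pairing \<langle>\<xi>,y\<rangle> = T(\<xi> T_n(y)) for \<xi> in K_n (least such n; independent of n).\<close>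
definition pairing :: "(nat \<Rightarrow> 'a::field set) \<Rightarrow> 'a \<Rightarrow> (nat \<Rightarrow> 'a) \<Rightarrow> 'a" where
  "pairing Kt \<xi> y = (let n = (LEAST n. \<xi> \<in> Kt n) in Tn Kt 0 (\<xi> * y n))"

definition weak_star_topology :: "(nat \<Rightarrow> 'a::field set) \<Rightarrow> ('a \<Rightarrow> real) \<Rightarrow> (nat \<Rightarrow> 'a) topology" where
  "weak_star_topology Kt av =
     pullback_topology (Kbar Kt)
       (\<lambda>y. restrict (\<lambda>\<xi>. pairing Kt \<xi> y) (tower_union Kt))
       (product_topology (\<lambda>_. abs_topology (Kt 0) av) (tower_union Kt))"

end

theory Submission
  imports Defs
begin

text \<open>Every \<open>g \<in> Gal(K/k)\<close> acts on \<open>\<overline>K\<close> coordinatewise, \<open>(g y)\<^sub>n = g (y\<^sub>n)\<close>. This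
  preserves \<open>\<overline>K\<close> because each Galois \<open>K\<^sub>n\<close> is normal over \<open>k\<close>, so \<open>g (K\<^sub>n) = K\<^sub>n\<close>, and
  \<open>g\<close> commutes with the normalized traces \<open>T\<^sub>n\<close> (it transports a basis of \<open>K\<^sub>\<nu>/K\<^sub>n\<close> to
  another one). The identity \<open>\<langle>\<xi>, g y\<rangle> = \<langle>g\<inverse> \<xi>, y\<rangle>\<close> makes the action \<open>*\<close>-weakly
  continuous. For uniqueness, every \<open>y\<close> is the \<open>*\<close>-weak limit of its truncations
  \<open>y\<^sub>N \<in> K\<close>, because \<open>\<langle>\<xi>, y\<^sub>N\<rangle> = \<langle>\<xi>, y\<rangle>\<close> as soon as \<open>\<xi> \<in> K\<^sub>N\<close>, and \<open>\<sigma>(\<overline>K, K)\<close> is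
  Hausdorff since the topology of \<open>k\<close> is and the pairing separates points.\<close>

section \<open>Subfields and indexed bases\<close>

lemma subfield_mult: "is_subfield F \<Longrightarrow> x \<in> F \<Longrightarrow> y \<in> F \<Longrightarrow> x * y \<in> F"
  and subfield_add: "is_subfield F \<Longrightarrow> x \<in> F \<Longrightarrow> y \<in> F \<Longrightarrow> x + y \<in> F"
  and subfield_diff: "is_subfield F \<Longrightarrow> x \<in> F \<Longrightarrow> y \<in> F \<Longrightarrow> x - y \<in> F"
  and subfield_0: "is_subfield F \<Longrightarrow> 0 \<in> F"
  and subfield_1: "is_subfield F \<Longrightarrow> 1 \<in> F"
  unfolding is_subfield_def by auto

lemma subfield_inverse: "is_subfield F \<Longrightarrow> x \<in> F \<Longrightarrow> inverse x \<in> F"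
  unfolding is_subfield_def by (cases "x = 0") auto

lemma subfield_divide: "is_subfield F \<Longrightarrow> x \<in> F \<Longrightarrow> y \<in> F \<Longrightarrow> x / y \<in> F"
  by (simp add: divide_inverse subfield_mult subfield_inverse)

lemma subfield_uminus: "is_subfield F \<Longrightarrow> x \<in> F \<Longrightarrow> - x \<in> F"
  using subfield_diff[of F 0 x] subfield_0[of F] by simp

lemma subfield_of_nat: "is_subfield F \<Longrightarrow> of_nat n \<in> F"
  by (induction n) (auto intro: subfield_add subfield_0 subfield_1)

lemma subfield_sum: "is_subfield F \<Longrightarrow> (\<And>i. i \<in> I \<Longrightarrow> f i \<in> F) \<Longrightarrow> sum f I \<in> F"
  by (induction I rule: infinite_finite_induct) (auto intro: subfield_0 subfield_add)

lemma subfield_power: "is_subfield F \<Longrightarrow> x \<in> F \<Longrightarrow> x ^ n \<in> F"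
  by (induction n) (auto intro: subfield_mult subfield_1)

text \<open>Bases indexed by an arbitrary finite set generalize \<^const>\<open>is_basis\<close>, whose index set
  \<open>{..<length bs}\<close> is too rigid for the product basis of a tower \<open>F \<subseteq> M \<subseteq> L\<close>.\<close>

definition indexed_basis :: "'a::field set \<Rightarrow> 'a set \<Rightarrow> 'i set \<Rightarrow> ('i \<Rightarrow> 'a) \<Rightarrow> bool" where
  "indexed_basis F L I b \<longleftrightarrow> finite I \<and> b ` I \<subseteq> L \<and>
     (\<forall>v\<in>L. \<exists>!c. (\<forall>i\<in>I. c i \<in> F) \<and> (\<forall>i. i \<notin> I \<longrightarrow> c i = 0) \<and> v = (\<Sum>i\<in>I. c i * b i))"

definition indexed_coords :: "'a::field set \<Rightarrow> 'i set \<Rightarrow> ('i \<Rightarrow> 'a) \<Rightarrow> 'a \<Rightarrow> 'i \<Rightarrow> 'a" where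
  "indexed_coords F I b v =
     (THE c. (\<forall>i\<in>I. c i \<in> F) \<and> (\<forall>i. i \<notin> I \<longrightarrow> c i = 0) \<and> v = (\<Sum>i\<in>I. c i * b i))"

definition indexed_trace :: "'a::field set \<Rightarrow> 'i set \<Rightarrow> ('i \<Rightarrow> 'a) \<Rightarrow> 'a \<Rightarrow> 'a" where
  "indexed_trace F I b x = (\<Sum>i\<in>I. indexed_coords F I b (x * b i) i)"

definition spans :: "'a::field set \<Rightarrow> 'a set \<Rightarrow> 'i set \<Rightarrow> ('i \<Rightarrow> 'a) \<Rightarrow> bool" where
  "spans F L I b \<longleftrightarrow> (\<forall>v\<in>L. \<exists>c. (\<forall>i\<in>I. c i \<in> F) \<and> v = (\<Sum>i\<in>I. c i * b i))"

definition lin_independent :: "'a::field set \<Rightarrow> 'i set \<Rightarrow> ('i \<Rightarrow> 'a) \<Rightarrow> bool" where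
  "lin_independent F I b \<longleftrightarrow>
     (\<forall>c. (\<forall>i\<in>I. c i \<in> F) \<and> (\<Sum>i\<in>I. c i * b i) = 0 \<longrightarrow> (\<forall>i\<in>I. c i = 0))"

lemma lin_independentD:
  "lin_independent F I b \<Longrightarrow> (\<And>i. i \<in> I \<Longrightarrow> c i \<in> F) \<Longrightarrow> (\<Sum>i\<in>I. c i * b i) = 0 \<Longrightarrow>
    i \<in> I \<Longrightarrow> c i = 0"
  unfolding lin_independent_def by blast

lemma is_basis_iff_indexed_basis: "is_basis F L bs \<longleftrightarrow> indexed_basis F L {..<length bs} ((!) bs)"
  unfolding is_basis_def indexed_basis_def Ball_def lessThan_iff
  by (auto simp: set_conv_nth not_less)

lemma coords_eq_indexed_coords: "coords F bs v = indexed_coords F {..<length bs} ((!) bs) v"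
  unfolding coords_def indexed_coords_def Ball_def lessThan_iff by (simp add: not_less)

lemma indexed_basisD:
  assumes "indexed_basis F L I b"
  shows "finite I" "\<And>i. i \<in> I \<Longrightarrow> b i \<in> L"
  using assms by (auto simp: indexed_basis_def)

lemma indexed_coordsD:
  assumes "indexed_basis F L I b" "v \<in> L"
  shows "\<And>i. i \<in> I \<Longrightarrow> indexed_coords F I b v i \<in> F"
    and "\<And>i. i \<notin> I \<Longrightarrow> indexed_coords F I b v i = 0"
    and "v = (\<Sum>i\<in>I. indexed_coords F I b v i * b i)"
proof -
  let ?P = "\<lambda>c. (\<forall>i\<in>I. c i \<in> F) \<and> (\<forall>i. i \<notin> I \<longrightarrow> c i = 0) \<and> v = (\<Sum>i\<in>I. c i * b i)"
  have "\<exists>!c. ?P c" using assms unfolding indexed_basis_def by blast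
  then have "?P (indexed_coords F I b v)" unfolding indexed_coords_def by (rule theI')
  then show "\<And>i. i \<in> I \<Longrightarrow> indexed_coords F I b v i \<in> F"
    and "\<And>i. i \<notin> I \<Longrightarrow> indexed_coords F I b v i = 0"
    and "v = (\<Sum>i\<in>I. indexed_coords F I b v i * b i)" by auto
qed

lemma indexed_coords_unique:
  assumes "indexed_basis F L I b" "v \<in> L" "\<And>i. i \<in> I \<Longrightarrow> c i \<in> F" "\<And>i. i \<notin> I \<Longrightarrow> c i = 0"
    and "v = (\<Sum>i\<in>I. c i * b i)"
  shows "indexed_coords F I b v = c"
proof -
  let ?P = "\<lambda>c. (\<forall>i\<in>I. c i \<in> F) \<and> (\<forall>i. i \<notin> I \<longrightarrow> c i = 0) \<and> v = (\<Sum>i\<in>I. c i * b i)"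
  have "\<exists>!c. ?P c" using assms unfolding indexed_basis_def by blast
  moreover have "?P c" using assms by auto
  ultimately show ?thesis unfolding indexed_coords_def using the1_equality[of ?P c] by blast
qed

lemma indexed_coords_eqI:
  assumes "indexed_basis F L I b" "v \<in> L" "\<And>i. i \<in> I \<Longrightarrow> c i \<in> F"
    and "v = (\<Sum>i\<in>I. c i * b i)" "i \<in> I"
  shows "indexed_coords F I b v i = c i"
proof -
  have "indexed_coords F I b v = (\<lambda>i. if i \<in> I then c i else 0)"
    by (rule indexed_coords_unique[OF assms(1,2)]) (use assms in auto)
  then show ?thesis using assms(5) by simp
qed

lemma indexed_coords_lincomb:
  assumes F: "is_subfield F" and L: "is_subfield L" and F_sub_L: "F \<subseteq> L" and B: "indexed_basis F L I b"
    and A: "finite A" and c: "\<And>a. a \<in> A \<Longrightarrow> c a \<in> F" and w: "\<And>a. a \<in> A \<Longrightarrow> w a \<in> L"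
  shows "indexed_coords F I b (\<Sum>a\<in>A. c a * w a) = (\<lambda>i. \<Sum>a\<in>A. c a * indexed_coords F I b (w a) i)"
proof (rule indexed_coords_unique[OF B])
  show "(\<Sum>a\<in>A. c a * w a) \<in> L"
    using c w F_sub_L by (auto intro!: subfield_sum[OF L] subfield_mult[OF L])
  show "(\<Sum>a\<in>A. c a * indexed_coords F I b (w a) i) \<in> F" if "i \<in> I" for i
    using c indexed_coordsD(1)[OF B w that] by (auto intro!: subfield_sum[OF F] subfield_mult[OF F])
  show "(\<Sum>a\<in>A. c a * indexed_coords F I b (w a) i) = 0" if "i \<notin> I" for i
    using indexed_coordsD(2)[OF B w that] by simp
  have "(\<Sum>a\<in>A. c a * w a) = (\<Sum>a\<in>A. c a * (\<Sum>i\<in>I. indexed_coords F I b (w a) i * b i))"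
    using indexed_coordsD(3)[OF B w] by (auto intro!: sum.cong)
  also have "\<dots> = (\<Sum>i\<in>I. (\<Sum>a\<in>A. c a * indexed_coords F I b (w a) i) * b i)"
    by (simp add: sum_distrib_left sum_distrib_right mult.assoc sum.swap[of _ A])
  finally show "(\<Sum>a\<in>A. c a * w a) = (\<Sum>i\<in>I. (\<Sum>a\<in>A. c a * indexed_coords F I b (w a) i) * b i)" .
qed

lemma indexed_coords_basis_vector:
  assumes B: "indexed_basis F L I b" and F: "is_subfield F" and l: "l \<in> I"
  shows "indexed_coords F I b (b l) = (\<lambda>k. if k = l then 1 else 0)"
proof (rule indexed_coords_unique[OF B])
  show "b l \<in> L" using indexed_basisD(2)[OF B l] .
  show "b l = (\<Sum>k\<in>I. (if k = l then 1 else 0) * b k)"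
  proof -
    have "(\<Sum>k\<in>I. (if k = l then 1 else 0) * b k) = (\<Sum>k\<in>I. if k = l then b k else 0)"
      by (rule sum.cong) auto
    then show ?thesis using l indexed_basisD(1)[OF B] by simp
  qed
qed (use l subfield_0[OF F] subfield_1[OF F] in auto)

lemma indexed_basisI:
  assumes F: "is_subfield F" and "finite I" "b ` I \<subseteq> L" "spans F L I b" "lin_independent F I b"
  shows "indexed_basis F L I b"
  unfolding indexed_basis_def
proof (intro conjI ballI assms(2,3))
  fix v assume "v \<in> L"
  then obtain c where c: "\<forall>i\<in>I. c i \<in> F" "v = (\<Sum>i\<in>I. c i * b i)"
    using assms(4) unfolding spans_def by blast
  let ?c = "\<lambda>i. if i \<in> I then c i else 0"
  show "\<exists>!c. (\<forall>i\<in>I. c i \<in> F) \<and> (\<forall>i. i \<notin> I \<longrightarrow> c i = 0) \<and> v = (\<Sum>i\<in>I. c i * b i)"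
  proof (rule ex1I[of _ ?c])
    show "(\<forall>i\<in>I. ?c i \<in> F) \<and> (\<forall>i. i \<notin> I \<longrightarrow> ?c i = 0) \<and> v = (\<Sum>i\<in>I. ?c i * b i)"
      using c by simp
    fix e assume e: "(\<forall>i\<in>I. e i \<in> F) \<and> (\<forall>i. i \<notin> I \<longrightarrow> e i = 0) \<and> v = (\<Sum>i\<in>I. e i * b i)"
    have "(\<Sum>i\<in>I. (e i - c i) * b i) = 0"
      using e c by (simp add: algebra_simps sum_subtractf)
    moreover have "\<forall>i\<in>I. e i - c i \<in> F" using e c by (auto intro: subfield_diff[OF F])
    ultimately have "\<forall>i\<in>I. e i - c i = 0" using assms(5) spec[of _ "\<lambda>i. e i - c i"] unfolding lin_independent_def by blast
    then show "e = ?c" using e by (auto simp: fun_eq_iff)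
  qed
qed

lemma indexed_basis_lin_independent:
  assumes F: "is_subfield F" and L: "is_subfield L" and B: "indexed_basis F L I b"
  shows "lin_independent F I b"
  unfolding lin_independent_def
proof (intro allI impI ballI)
  fix c i assume c: "(\<forall>i\<in>I. c i \<in> F) \<and> (\<Sum>i\<in>I. c i * b i) = 0" and i: "i \<in> I"
  have "indexed_coords F I b 0 i = c i"
    by (rule indexed_coords_eqI[OF B subfield_0[OF L] _ _ i]) (use c in auto)
  moreover have "indexed_coords F I b 0 i = 0"
    by (rule indexed_coords_eqI[OF B subfield_0[OF L], of "\<lambda>_. 0"]) (use subfield_0[OF F] i in auto)
  ultimately show "c i = 0" by simp
qed

lemma indexed_coords_change_basis:
  assumes F: "is_subfield F" and L: "is_subfield L" and F_sub_L: "F \<subseteq> L"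
    and B: "indexed_basis F L I b" and D: "indexed_basis F L J d" and v: "v \<in> L"
  shows "indexed_coords F J d v = (\<lambda>m. \<Sum>l\<in>I. indexed_coords F I b v l * indexed_coords F J d (b l) m)"
proof -
  have "indexed_coords F J d v = indexed_coords F J d (\<Sum>l\<in>I. indexed_coords F I b v l * b l)"
    using indexed_coordsD(3)[OF B v] by simp
  also have "\<dots> = (\<lambda>m. \<Sum>l\<in>I. indexed_coords F I b v l * indexed_coords F J d (b l) m)"
    by (rule indexed_coords_lincomb[OF F L F_sub_L D indexed_basisD(1)[OF B]])
      (use indexed_coordsD(1)[OF B v] indexed_basisD(2)[OF B] in auto)
  finally show ?thesis .
qed

lemma indexed_coords_linear:
  assumes F: "is_subfield F" and L: "is_subfield L" and F_sub_L: "F \<subseteq> L" and B: "indexed_basis F L I b"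
    and a: "a \<in> F" and x: "x \<in> L" and y: "y \<in> L"
  shows "indexed_coords F I b (a * x + y) = (\<lambda>i. a * indexed_coords F I b x i + indexed_coords F I b y i)"
  using indexed_coords_lincomb[OF F L F_sub_L B, of "{0::nat, 1}" "\<lambda>k. if k = 0 then a else 1"
      "\<lambda>k. if k = 0 then x else y"] a x y subfield_1[OF F]
  by simp

lemma indexed_trace_linear:
  assumes F: "is_subfield F" and L: "is_subfield L" and F_sub_L: "F \<subseteq> L" and B: "indexed_basis F L I b"
    and a: "a \<in> F" and x: "x \<in> L" and y: "y \<in> L"
  shows "indexed_trace F I b (a * x + y) = a * indexed_trace F I b x + indexed_trace F I b y"
proof -
  have "indexed_coords F I b ((a * x + y) * b i) i
      = a * indexed_coords F I b (x * b i) i + indexed_coords F I b (y * b i) i" if "i \<in> I" for i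
    using indexed_coords_linear[OF F L F_sub_L B a, of "x * b i" "y * b i"] x y indexed_basisD(2)[OF B that]
    by (simp add: distrib_right mult.assoc subfield_mult[OF L])
  then show ?thesis unfolding indexed_trace_def by (simp add: sum.distrib sum_distrib_left)
qed

lemma indexed_trace_in:
  assumes F: "is_subfield F" and L: "is_subfield L" and B: "indexed_basis F L I b" and x: "x \<in> L"
  shows "indexed_trace F I b x \<in> F"
  unfolding indexed_trace_def
  using indexed_coordsD(1)[OF B subfield_mult[OF L x indexed_basisD(2)[OF B]]]
  by (auto intro!: subfield_sum[OF F])

lemma indexed_trace_one:
  assumes F: "is_subfield F" and B: "indexed_basis F L I b"
  shows "indexed_trace F I b 1 = of_nat (card I)"
  unfolding indexed_trace_def using indexed_coords_basis_vector[OF B F] by simp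

lemma indexed_trace_basis_indep:
  assumes F: "is_subfield F" and L: "is_subfield L" and F_sub_L: "F \<subseteq> L"
    and B: "indexed_basis F L I b" and D: "indexed_basis F L J d" and x: "x \<in> L"
  shows "indexed_trace F J d x = indexed_trace F I b x"
proof -
  note change_basis = indexed_coords_change_basis[OF F L F_sub_L]
  define P where "P j = indexed_coords F I b (d j)" for j
  define Q where "Q l = indexed_coords F J d (b l)" for l
  define A where "A k = indexed_coords F I b (x * b k)" for k
  have bL: "b l \<in> L" if "l \<in> I" for l using indexed_basisD(2)[OF B that] .
  have dL: "d j \<in> L" if "j \<in> J" for j using indexed_basisD(2)[OF D that] .
  have QP: "(\<Sum>j\<in>J. Q l j * P j k) = (if k = l then 1 else 0)" if "l \<in> I" for l k
    using fun_cong[OF change_basis[OF D B bL[OF that]], of k] indexed_coords_basis_vector[OF B F that]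
    unfolding P_def Q_def by simp
  have xd: "indexed_coords F J d (x * d j) j = (\<Sum>l\<in>I. (\<Sum>k\<in>I. P j k * A k l) * Q l j)"
    if j: "j \<in> J" for j
  proof -
    have "x * d j = x * (\<Sum>k\<in>I. P j k * b k)"
      using indexed_coordsD(3)[OF B dL[OF j]] unfolding P_def by simp
    also have "\<dots> = (\<Sum>k\<in>I. P j k * (x * b k))" by (simp add: sum_distrib_left mult_ac)
    finally have "indexed_coords F I b (x * d j) = (\<lambda>l. \<Sum>k\<in>I. P j k * A k l)"
      using indexed_coords_lincomb[OF F L F_sub_L B indexed_basisD(1)[OF B]] indexed_coordsD(1)[OF B dL[OF j]]
        bL x unfolding P_def A_def by (simp add: subfield_mult[OF L])
    then show ?thesis
      using change_basis[OF B D subfield_mult[OF L x dL[OF j]]] unfolding Q_def by simp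
  qed
  have "indexed_trace F J d x = (\<Sum>j\<in>J. \<Sum>l\<in>I. \<Sum>k\<in>I. A k l * (Q l j * P j k))"
    unfolding indexed_trace_def using xd by (simp add: sum_distrib_left sum_distrib_right mult_ac)
  also have "\<dots> = (\<Sum>l\<in>I. \<Sum>k\<in>I. \<Sum>j\<in>J. A k l * (Q l j * P j k))"
    by (rule trans[OF sum.swap], rule sum.cong[OF refl], rule sum.swap)
  also have "\<dots> = (\<Sum>l\<in>I. \<Sum>k\<in>I. A k l * (if k = l then 1 else 0))"
    using QP by (simp add: sum_distrib_left[symmetric])
  also have "\<dots> = indexed_trace F I b x"
    using indexed_basisD(1)[OF B] unfolding indexed_trace_def A_def by (simp add: if_distrib cong: if_cong)
  finally show ?thesis .
qed

text \<open>In characteristic 0 the trace of \<open>1\<close> recovers the dimension, which is therefore well defined.\<close>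

lemma indexed_basis_card_eq:
  fixes b :: "'i \<Rightarrow> 'a::field_char_0" and d :: "'j \<Rightarrow> 'a"
  assumes F: "is_subfield F" and L: "is_subfield L" and F_sub_L: "F \<subseteq> L"
    and B: "indexed_basis F L I b" and D: "indexed_basis F L J d"
  shows "card I = card J"
  using indexed_trace_basis_indep[OF F L F_sub_L B D subfield_1[OF L]]
    indexed_trace_one[OF F B] indexed_trace_one[OF F D] by simp

lemma indexed_basis_reindex:
  assumes F: "is_subfield F" and L: "is_subfield L" and B: "indexed_basis F L I b"
    and h: "bij_betw h J I"
  shows "indexed_basis F L J (b \<circ> h)"
proof (rule indexed_basisI[OF F])
  have reindex: "(\<Sum>j\<in>J. c (h j) * b (h j)) = (\<Sum>i\<in>I. c i * b i)" for c
    using sum.reindex_bij_betw[OF h] .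
  have hJ: "h j \<in> I" if "j \<in> J" for j using h that by (auto simp: bij_betw_def)
  show "finite J" using bij_betw_finite[OF h] indexed_basisD(1)[OF B] by simp
  show "(b \<circ> h) ` J \<subseteq> L" using hJ indexed_basisD(2)[OF B] by auto
  show "spans F L J (b \<circ> h)" unfolding spans_def
  proof
    fix v assume v: "v \<in> L"
    show "\<exists>c. (\<forall>j\<in>J. c j \<in> F) \<and> v = (\<Sum>j\<in>J. c j * (b \<circ> h) j)"
      by (rule exI[of _ "\<lambda>j. indexed_coords F I b v (h j)"])
        (use indexed_coordsD(1,3)[OF B v] reindex hJ in auto)
  qed
  show "lin_independent F J (b \<circ> h)" unfolding lin_independent_def
  proof (intro allI impI ballI)
    fix c j assume c: "(\<forall>j\<in>J. c j \<in> F) \<and> (\<Sum>j\<in>J. c j * (b \<circ> h) j) = 0" and j: "j \<in> J"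
    let ?c = "\<lambda>i. c (the_inv_into J h i)"
    have inv: "the_inv_into J h (h j) = j" if "j \<in> J" for j
      using the_inv_into_f_f h that by (fastforce simp: bij_betw_def)
    have "\<forall>i\<in>I. ?c i \<in> F" "(\<Sum>i\<in>I. ?c i * b i) = 0"
      using c reindex[of ?c] inv h by (auto simp: bij_betw_def cong: sum.cong)
    then have "?c (h j) = 0"
      using lin_independentD[OF indexed_basis_lin_independent[OF F L B], of ?c] hJ[OF j] by blast
    then show "c j = 0" using inv[OF j] by simp
  qed
qed

lemma indexed_basis_cong:
  assumes "\<And>i. i \<in> I \<Longrightarrow> b i = b' i"
  shows "indexed_basis F L I b \<longleftrightarrow> indexed_basis F L I b'"
proof -
  have "b ` I = b' ` I" using assms by auto
  moreover have "(\<Sum>i\<in>I. c i * b i) = (\<Sum>i\<in>I. c i * b' i)" for c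
    using assms by (auto intro!: sum.cong)
  ultimately show ?thesis unfolding indexed_basis_def by simp
qed

lemma indexed_basis_imp_is_basis:
  assumes F: "is_subfield F" and L: "is_subfield L" and B: "indexed_basis F L I b"
  shows "\<exists>bs. is_basis F L bs \<and> length bs = card I"
proof -
  obtain xs where xs: "set xs = I" "distinct xs" using finite_distinct_list[OF indexed_basisD(1)[OF B]] by blast
  have "indexed_basis F L {..<length xs} (b \<circ> (!) xs)"
    by (rule indexed_basis_reindex[OF F L B bij_betw_nth[OF xs(2) refl xs(1)[symmetric]]])
  then have "is_basis F L (map b xs)" unfolding is_basis_iff_indexed_basis
    using indexed_basis_cong[of "{..<length xs}" "(!) (map b xs)" "b \<circ> (!) xs" F L] by simp
  then show ?thesis using xs distinct_card by fastforce
qed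

lemma field_degree_trace_eq_indexed:
  fixes b :: "'i \<Rightarrow> 'a::field_char_0"
  assumes F: "is_subfield F" and L: "is_subfield L" and F_sub_L: "F \<subseteq> L" and B: "indexed_basis F L I b"
  shows "field_degree F L = card I"
    and "\<And>x. x \<in> L \<Longrightarrow> field_trace F L x = indexed_trace F I b x"
proof -
  obtain bs where "is_basis F L bs" using indexed_basis_imp_is_basis[OF F L B] by blast
  then have "is_basis F L (some_basis F L)" unfolding some_basis_def by (rule someI)
  then have SB: "indexed_basis F L {..<length (some_basis F L)} ((!) (some_basis F L))"
    by (simp add: is_basis_iff_indexed_basis)
  show "field_degree F L = card I"
    unfolding field_degree_def using indexed_basis_card_eq[OF F L F_sub_L SB B] by simp
  fix x assume x: "x \<in> L"
  have "field_trace F L x = indexed_trace F {..<length (some_basis F L)} ((!) (some_basis F L)) x"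
    unfolding field_trace_def indexed_trace_def Let_def coords_eq_indexed_coords by simp
  also have "\<dots> = indexed_trace F I b x" by (rule indexed_trace_basis_indep[OF F L F_sub_L B SB x])
  finally show "field_trace F L x = indexed_trace F I b x" .
qed

lemma indexed_basis_self:
  assumes F: "is_subfield F"
  shows "indexed_basis F F {()} (\<lambda>_. 1)"
    and "\<And>x. x \<in> F \<Longrightarrow> indexed_trace F {()} (\<lambda>_. 1) x = x"
proof -
  show B: "indexed_basis F F {()} (\<lambda>_. 1)"
    unfolding indexed_basis_def
    by (auto intro!: ex1I[of _ "\<lambda>_. _"] simp: fun_eq_iff subfield_1[OF F])
  fix x assume "x \<in> F"
  then show "indexed_trace F {()} (\<lambda>_. 1) x = x"
    unfolding indexed_trace_def using indexed_coords_eqI[OF B, of x "\<lambda>_. x"] by simp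
qed

section \<open>Towers of bases\<close>

lemma sum_product_family:
  fixes e :: "'i \<times> 'j \<Rightarrow> 'a::comm_semiring_0"
  shows "(\<Sum>j\<in>J. (\<Sum>i\<in>I. e (i, j) * b i) * c j) = (\<Sum>p\<in>I \<times> J. e p * (case p of (i, j) \<Rightarrow> b i * c j))"
proof -
  have "(\<Sum>j\<in>J. (\<Sum>i\<in>I. e (i, j) * b i) * c j) = (\<Sum>j\<in>J. \<Sum>i\<in>I. e (i, j) * (b i * c j))"
    by (simp add: sum_distrib_right mult.assoc)
  also have "\<dots> = (\<Sum>p\<in>I \<times> J. e p * (case p of (i, j) \<Rightarrow> b i * c j))"
    by (subst sum.swap) (auto simp: sum.cartesian_product intro!: sum.cong)
  finally show ?thesis .
qed

lemma indexed_basis_tower: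
  assumes F: "is_subfield F" and M: "is_subfield M" and L: "is_subfield L"
    and F_sub_M: "F \<subseteq> M" and M_sub_L: "M \<subseteq> L"
    and B: "indexed_basis F M I b" and C: "indexed_basis M L J c"
  shows "indexed_basis F L (I \<times> J) (\<lambda>(i, j). b i * c j)"
proof (rule indexed_basisI[OF F])
  note bM = indexed_basisD(2)[OF B] and cL = indexed_basisD(2)[OF C]
  show "finite (I \<times> J)" using indexed_basisD(1)[OF B] indexed_basisD(1)[OF C] by simp
  show "(\<lambda>(i, j). b i * c j) ` (I \<times> J) \<subseteq> L" using bM cL M_sub_L by (auto intro!: subfield_mult[OF L])
  show "spans F L (I \<times> J) (\<lambda>(i, j). b i * c j)" unfolding spans_def
  proof
    fix v assume v: "v \<in> L"
    define \<gamma> where "\<gamma> = indexed_coords M J c v"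
    have \<gamma>M: "\<gamma> j \<in> M" if "j \<in> J" for j using indexed_coordsD(1)[OF C v that] \<gamma>_def by simp
    define \<beta> where "\<beta> p = indexed_coords F I b (\<gamma> (snd p)) (fst p)" for p
    have "v = (\<Sum>j\<in>J. \<gamma> j * c j)" using indexed_coordsD(3)[OF C v] \<gamma>_def by simp
    also have "\<dots> = (\<Sum>j\<in>J. (\<Sum>i\<in>I. \<beta> (i, j) * b i) * c j)"
      using indexed_coordsD(3)[OF B \<gamma>M] by (auto simp: \<beta>_def intro!: sum.cong)
    also have "\<dots> = (\<Sum>p\<in>I \<times> J. \<beta> p * (case p of (i, j) \<Rightarrow> b i * c j))"
      by (rule sum_product_family)
    finally show "\<exists>e. (\<forall>p\<in>I \<times> J. e p \<in> F) \<and> v = (\<Sum>p\<in>I \<times> J. e p * (case p of (i, j) \<Rightarrow> b i * c j))"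
      using indexed_coordsD(1)[OF B \<gamma>M] by (intro exI[of _ \<beta>]) (auto simp: \<beta>_def)
  qed
  show "lin_independent F (I \<times> J) (\<lambda>(i, j). b i * c j)" unfolding lin_independent_def
  proof (intro allI impI ballI)
    fix e p
    assume e: "(\<forall>p\<in>I \<times> J. e p \<in> F) \<and> (\<Sum>p\<in>I \<times> J. e p * (case p of (i, j) \<Rightarrow> b i * c j)) = 0"
      and p: "p \<in> I \<times> J"
    define \<delta> where "\<delta> j = (\<Sum>i\<in>I. e (i, j) * b i)" for j
    have "(\<Sum>j\<in>J. \<delta> j * c j) = 0"
      using e unfolding \<delta>_def sum_product_family by simp
    moreover have "\<forall>j\<in>J. \<delta> j \<in> M"
      unfolding \<delta>_def using e bM F_sub_M by (auto intro!: subfield_sum[OF M] subfield_mult[OF M])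
    ultimately have "\<delta> (snd p) = 0"
      using lin_independentD[OF indexed_basis_lin_independent[OF M L C]] p by auto
    then show "e p = 0"
      using lin_independentD[OF indexed_basis_lin_independent[OF F M B], of "\<lambda>i. e (i, snd p)"] e p
      unfolding \<delta>_def by (cases p) auto
  qed
qed

lemma indexed_trace_tower:
  assumes F: "is_subfield F" and M: "is_subfield M" and L: "is_subfield L"
    and F_sub_M: "F \<subseteq> M" and M_sub_L: "M \<subseteq> L"
    and B: "indexed_basis F M I b" and C: "indexed_basis M L J c" and x: "x \<in> M"
  shows "indexed_trace F (I \<times> J) (\<lambda>(i, j). b i * c j) x = of_nat (card J) * indexed_trace F I b x"
proof -
  let ?bc = "\<lambda>(i, j). b i * c j"
  have BC: "indexed_basis F L (I \<times> J) ?bc" by (rule indexed_basis_tower[OF assms(1-7)])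
  have F_sub_L: "F \<subseteq> L" using F_sub_M M_sub_L by simp
  have diag: "indexed_coords F (I \<times> J) ?bc (x * ?bc (i, j)) (i, j) = indexed_coords F I b (x * b i) i"
    if i: "i \<in> I" and j: "j \<in> J" for i j
  proof -
    have xb: "x * b i \<in> M" using subfield_mult[OF M x indexed_basisD(2)[OF B i]] .
    define a where "a = indexed_coords F I b (x * b i)"
    have "x * b i = (\<Sum>k\<in>I. a k * b k)" using indexed_coordsD(3)[OF B xb] unfolding a_def .
    then have "x * ?bc (i, j) = (\<Sum>k\<in>I. a k * ?bc (k, j))"
      by (simp add: sum_distrib_right mult.assoc[symmetric])
    then have "indexed_coords F (I \<times> J) ?bc (x * ?bc (i, j))
        = indexed_coords F (I \<times> J) ?bc (\<Sum>k\<in>I. a k * ?bc (k, j))" by simp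
    also have "\<dots> = (\<lambda>p. \<Sum>k\<in>I. a k * indexed_coords F (I \<times> J) ?bc (?bc (k, j)) p)"
      by (rule indexed_coords_lincomb[OF F L F_sub_L BC indexed_basisD(1)[OF B]])
        (use indexed_coordsD(1)[OF B xb] indexed_basisD(2)[OF BC] j in \<open>auto simp: a_def\<close>)
    also have "\<dots> = (\<lambda>p. \<Sum>k\<in>I. a k * (if p = (k, j) then 1 else 0))"
      using indexed_coords_basis_vector[OF BC F, of "(_, j)"] j by (intro ext sum.cong) auto
    finally show ?thesis using i indexed_basisD(1)[OF B] unfolding a_def by (simp add: if_distrib cong: if_cong)
  qed
  have "indexed_trace F (I \<times> J) ?bc x = (\<Sum>i\<in>I. \<Sum>j\<in>J. indexed_coords F (I \<times> J) ?bc (x * ?bc (i, j)) (i, j))"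
    unfolding indexed_trace_def sum.cartesian_product by (rule sum.cong) auto
  also have "\<dots> = (\<Sum>i\<in>I. of_nat (card J) * indexed_coords F I b (x * b i) i)"
    using diag by simp
  finally show ?thesis unfolding indexed_trace_def by (simp add: sum_distrib_left)
qed

lemma spans_remove_dependent:
  assumes F: "is_subfield F" and fin: "finite I" and span: "spans F L I b"
    and a: "\<forall>i\<in>I. a i \<in> F" "(\<Sum>i\<in>I. a i * b i) = 0" and i0: "i0 \<in> I" "a i0 \<noteq> 0"
  shows "spans F L (I - {i0}) b"
  unfolding spans_def
proof
  let ?I = "I - {i0}"
  have b0: "b i0 = (\<Sum>i\<in>?I. (- a i / a i0) * b i)"
  proof -
    have "a i0 * b i0 + (\<Sum>i\<in>?I. a i * b i) = 0"
      using a(2) sum.remove[OF fin i0(1), of "\<lambda>i. a i * b i"] by simp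
    then show ?thesis
      using i0(2) by (simp add: sum_divide_distrib[symmetric] sum_negf eq_neg_iff_add_eq_0 field_simps)
  qed
  fix v assume "v \<in> L"
  then obtain c where c: "\<forall>i\<in>I. c i \<in> F" "v = (\<Sum>i\<in>I. c i * b i)" using span unfolding spans_def by blast
  have "v = c i0 * b i0 + (\<Sum>i\<in>?I. c i * b i)"
    using c(2) sum.remove[OF fin i0(1), of "\<lambda>i. c i * b i"] by simp
  also have "\<dots> = (\<Sum>i\<in>?I. c i * b i) + c i0 * (\<Sum>i\<in>?I. (- a i / a i0) * b i)"
    unfolding b0 by (simp add: add.commute)
  also have "\<dots> = (\<Sum>i\<in>?I. (c i + c i0 * (- a i / a i0)) * b i)"
    by (simp only: sum.distrib distrib_right sum_distrib_left mult.assoc)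
  moreover have "c i + c i0 * (- a i / a i0) \<in> F" if "i \<in> ?I" for i
    using that c(1) a(1) i0(1)
    by (intro subfield_add[OF F] subfield_mult[OF F] subfield_divide[OF F] subfield_uminus[OF F]) auto
  ultimately show "\<exists>c. (\<forall>i\<in>?I. c i \<in> F) \<and> v = (\<Sum>i\<in>?I. c i * b i)"
    by (intro exI[of _ "\<lambda>i. c i + c i0 * (- a i / a i0)"]) simp
qed

lemma spans_imp_indexed_basis_subset:
  assumes F: "is_subfield F" and "finite I" "b ` I \<subseteq> L" "spans F L I b"
  shows "\<exists>T\<subseteq>I. indexed_basis F L T b"
  using assms(2-4)
proof (induction "card I" arbitrary: I rule: less_induct)
  case less
  show ?case
  proof (cases "lin_independent F I b")
    case True
    then show ?thesis using indexed_basisI[OF F] less.prems by blast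
  next
    case False
    then obtain a i0 where a: "\<forall>i\<in>I. a i \<in> F" "(\<Sum>i\<in>I. a i * b i) = 0" and i0: "i0 \<in> I" "a i0 \<noteq> 0"
      unfolding lin_independent_def by blast
    have "spans F L (I - {i0}) b" by (rule spans_remove_dependent[OF F less.prems(1,3) a i0])
    moreover have "card (I - {i0}) < card I" using less.prems(1) i0(1) by (meson card_Diff1_less)
    ultimately obtain T where "T \<subseteq> I - {i0}" "indexed_basis F L T b"
      using less.hyps[of "I - {i0}"] less.prems by blast
    then show ?thesis by blast
  qed
qed

section \<open>Algebraic elements and normality\<close>

text \<open>The reduced system eliminates the unknown \<open>j0\<close> by means of equation \<open>e\<close>.\<close>

lemma homogeneous_system_pivot:
  fixes C :: "'j \<Rightarrow> 'e \<Rightarrow> 'a::field"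
  assumes F: "is_subfield F" and J: "finite J" and j0: "j0 \<in> J" "C j0 e \<noteq> 0"
    and C: "\<forall>j\<in>J. \<forall>i\<in>insert e E. C j i \<in> F" and a: "\<forall>j\<in>J - {j0}. a j \<in> F"
    and reduced: "\<forall>i\<in>E. (\<Sum>j\<in>J - {j0}. a j * (C j i - C j e / C j0 e * C j0 i)) = 0"
  defines "s \<equiv> - (\<Sum>j\<in>J - {j0}. a j * C j e) / C j0 e"
  shows "\<forall>j\<in>J. (a(j0 := s)) j \<in> F" and "\<forall>i\<in>insert e E. (\<Sum>j\<in>J. (a(j0 := s)) j * C j i) = 0"
proof -
  have split: "(\<Sum>j\<in>J. (a(j0 := s)) j * C j i) = s * C j0 i + (\<Sum>j\<in>J - {j0}. a j * C j i)" for i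
  proof -
    have "(\<Sum>j\<in>J - {j0}. (a(j0 := s)) j * C j i) = (\<Sum>j\<in>J - {j0}. a j * C j i)"
      by (rule sum.cong) auto
    then show ?thesis using sum.remove[OF J j0(1), of "\<lambda>j. (a(j0 := s)) j * C j i"] by simp
  qed
  show "\<forall>j\<in>J. (a(j0 := s)) j \<in> F"
    unfolding s_def using C a j0
    by (auto intro!: subfield_divide[OF F] subfield_uminus[OF F] subfield_sum[OF F] subfield_mult[OF F])
  show "\<forall>i\<in>insert e E. (\<Sum>j\<in>J. (a(j0 := s)) j * C j i) = 0"
  proof
    fix i assume "i \<in> insert e E"
    moreover have "(\<Sum>j\<in>J - {j0}. a j * C j i) + s * C j0 i = 0" if "i \<in> E"
    proof -
      have "(\<Sum>j\<in>J - {j0}. a j * (C j i - C j e / C j0 e * C j0 i))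
          = (\<Sum>j\<in>J - {j0}. a j * C j i) - (\<Sum>j\<in>J - {j0}. a j * C j e) / C j0 e * C j0 i"
        by (simp add: right_diff_distrib sum_subtractf sum_distrib_right sum_divide_distrib mult.assoc)
      then show ?thesis using reduced that by (simp add: s_def)
    qed
    ultimately show "(\<Sum>j\<in>J. (a(j0 := s)) j * C j i) = 0"
      unfolding split using j0(2) by (auto simp: s_def add.commute)
  qed
qed

lemma homogeneous_system_nontrivial_solution:
  fixes C :: "'j \<Rightarrow> 'e \<Rightarrow> 'a::field"
  assumes F: "is_subfield F" and E: "finite E"
  shows "finite J \<Longrightarrow> card E < card J \<Longrightarrow> \<forall>j\<in>J. \<forall>i\<in>E. C j i \<in> F \<Longrightarrow>
    \<exists>a. (\<forall>j\<in>J. a j \<in> F) \<and> (\<exists>j\<in>J. a j \<noteq> 0) \<and> (\<forall>i\<in>E. (\<Sum>j\<in>J. a j * C j i) = 0)"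
  using E
proof (induction E arbitrary: J C rule: finite_induct)
  case empty
  then obtain j0 where "j0 \<in> J" by fastforce
  then show ?case
    by (intro exI[of _ "\<lambda>j. if j = j0 then 1 else 0"]) (auto intro: subfield_0[OF F] subfield_1[OF F])
next
  case (insert e E)
  show ?case
  proof (cases "\<forall>j\<in>J. C j e = 0")
    case True
    then show ?thesis using insert.IH[of J C] insert.prems insert.hyps by auto
  next
    case False
    then obtain j0 where j0: "j0 \<in> J" "C j0 e \<noteq> 0" by blast
    define C' where "C' j i = C j i - C j e / C j0 e * C j0 i" for j i
    have "card E < card (J - {j0})" using insert j0 by (simp add: card_Diff_singleton)
    moreover have "\<forall>j\<in>J - {j0}. \<forall>i\<in>E. C' j i \<in> F"
      using insert.prems(3) j0 unfolding C'_def
      by (auto intro!: subfield_diff[OF F] subfield_mult[OF F] subfield_divide[OF F])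
    ultimately obtain a where a: "\<forall>j\<in>J - {j0}. a j \<in> F" "\<exists>j\<in>J - {j0}. a j \<noteq> 0"
        "\<forall>i\<in>E. (\<Sum>j\<in>J - {j0}. a j * C' j i) = 0"
      using insert.IH[of "J - {j0}" C'] insert.prems by auto
    note pivot = homogeneous_system_pivot[OF F insert.prems(1) j0 insert.prems(3) a(1) a(3)[unfolded C'_def]]
    show ?thesis
      using pivot a(2) by (intro exI[of _ "a(j0 := - (\<Sum>j\<in>J - {j0}. a j * C j e) / C j0 e)"]) auto
  qed
qed

lemma indexed_basis_algebraic:
  assumes F: "is_subfield F" and L: "is_subfield L" and B: "indexed_basis F L I b" and x: "x \<in> L"
  shows "\<exists>q. q \<noteq> 0 \<and> (\<forall>k. coeff q k \<in> F) \<and> poly q x = 0"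
proof -
  define C where "C k = indexed_coords F I b (x ^ k)" for k
  have xk: "x ^ k \<in> L" for k using subfield_power[OF L x] .
  obtain a where a: "\<forall>j\<in>{..card I}. a j \<in> F" "\<exists>j\<in>{..card I}. a j \<noteq> 0"
      "\<forall>i\<in>I. (\<Sum>j\<in>{..card I}. a j * C j i) = 0"
    using homogeneous_system_nontrivial_solution[OF F indexed_basisD(1)[OF B], of "{..card I}" C]
      indexed_coordsD(1)[OF B xk] unfolding C_def by auto
  define q where "q = (\<Sum>j\<in>{..card I}. monom (a j) j)"
  have cq: "coeff q k = (if k \<le> card I then a k else 0)" for k
    unfolding q_def by (simp add: coeff_sum coeff_monom)
  have "poly q x = (\<Sum>j\<in>{..card I}. a j * (\<Sum>i\<in>I. C j i * b i))"
    using indexed_coordsD(3)[OF B xk] unfolding q_def C_def by (simp add: poly_sum poly_monom)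
  also have "\<dots> = (\<Sum>i\<in>I. (\<Sum>j\<in>{..card I}. a j * C j i) * b i)"
    by (simp add: sum_distrib_left sum_distrib_right mult.assoc sum.swap[of _ I])
  also have "\<dots> = 0" using a(3) by simp
  finally have "poly q x = 0" .
  moreover have "q \<noteq> 0" using a(2) cq by (metis atMost_iff coeff_0)
  moreover have "\<forall>k. coeff q k \<in> F" using cq a(1) subfield_0[OF F] by auto
  ultimately show ?thesis by blast
qed

definition ring_hom_on :: "('a::field \<Rightarrow> 'a) \<Rightarrow> 'a set \<Rightarrow> bool" where
  "ring_hom_on \<sigma> L \<longleftrightarrow> \<sigma> 1 = 1 \<and> (\<forall>x\<in>L. \<forall>y\<in>L. \<sigma> (x + y) = \<sigma> x + \<sigma> y \<and> \<sigma> (x * y) = \<sigma> x * \<sigma> y)"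

lemma field_auts_ring_hom_on: "\<sigma> \<in> field_auts L F \<Longrightarrow> ring_hom_on \<sigma> L"
  unfolding field_auts_def ring_hom_on_def by auto

lemma ring_hom_on_subset: "ring_hom_on \<sigma> L \<Longrightarrow> L' \<subseteq> L \<Longrightarrow> ring_hom_on \<sigma> L'"
  unfolding ring_hom_on_def by blast

context
  fixes \<sigma> :: "'a::field \<Rightarrow> 'a" and L :: "'a set"
  assumes L: "is_subfield L" and hom: "ring_hom_on \<sigma> L"
begin

lemma hom_add: "x \<in> L \<Longrightarrow> y \<in> L \<Longrightarrow> \<sigma> (x + y) = \<sigma> x + \<sigma> y"
  and hom_mult: "x \<in> L \<Longrightarrow> y \<in> L \<Longrightarrow> \<sigma> (x * y) = \<sigma> x * \<sigma> y"
  and hom_1: "\<sigma> 1 = 1"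
  using hom unfolding ring_hom_on_def by auto

lemma hom_0: "\<sigma> 0 = 0"
  using hom_add[of 0 0] subfield_0[OF L] by (metis add_cancel_right_right)

lemma hom_uminus: "x \<in> L \<Longrightarrow> \<sigma> (- x) = - \<sigma> x"
  using hom_add[of x "- x"] subfield_uminus[OF L] hom_0 by (metis neg_eq_iff_add_eq_0 add.right_inverse)

lemma hom_diff: "x \<in> L \<Longrightarrow> y \<in> L \<Longrightarrow> \<sigma> (x - y) = \<sigma> x - \<sigma> y"
  using hom_add[of x "- y"] hom_uminus[of y] subfield_uminus[OF L, of y] by simp

lemma hom_sum: "(\<And>i. i \<in> A \<Longrightarrow> f i \<in> L) \<Longrightarrow> \<sigma> (sum f A) = (\<Sum>i\<in>A. \<sigma> (f i))"
  by (induction A rule: infinite_finite_induct) (auto simp: hom_0 hom_add subfield_sum[OF L])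

lemma hom_power: "x \<in> L \<Longrightarrow> \<sigma> (x ^ n) = \<sigma> x ^ n"
  by (induction n) (auto simp: hom_1 hom_mult subfield_power[OF L])

lemma hom_lincomb:
  "(\<And>i. i \<in> A \<Longrightarrow> c i \<in> L) \<Longrightarrow> (\<And>i. i \<in> A \<Longrightarrow> w i \<in> L) \<Longrightarrow>
    \<sigma> (\<Sum>i\<in>A. c i * w i) = (\<Sum>i\<in>A. \<sigma> (c i) * \<sigma> (w i))"
  by (simp add: hom_sum hom_mult subfield_mult[OF L] cong: sum.cong)

lemma hom_inj_on: "inj_on \<sigma> L"
proof (rule inj_onI, rule ccontr)
  fix x y assume x: "x \<in> L" and y: "y \<in> L" and eq: "\<sigma> x = \<sigma> y" and "x \<noteq> y"
  then have "1 = \<sigma> ((x - y) * inverse (x - y))" using hom_1 by simp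
  also have "\<dots> = (\<sigma> x - \<sigma> y) * \<sigma> (inverse (x - y))"
    using x y by (simp add: hom_mult hom_diff subfield_diff[OF L] subfield_inverse[OF L])
  finally show False using eq by simp
qed

lemma hom_poly:
  assumes cF: "\<forall>k. coeff p k \<in> F" and F: "F \<subseteq> L" and F_fixed: "\<forall>a\<in>F. \<sigma> a = a" and z: "z \<in> L"
  shows "\<sigma> (poly p z) = poly p (\<sigma> z)"
proof -
  have cL: "coeff p i \<in> L" for i using cF F by blast
  have "\<sigma> (poly p z) = (\<Sum>i\<le>degree p. \<sigma> (coeff p i * z ^ i))"
    unfolding poly_altdef using cL z by (auto intro!: hom_sum subfield_mult[OF L] subfield_power[OF L])
  also have "\<dots> = (\<Sum>i\<le>degree p. \<sigma> (coeff p i) * \<sigma> z ^ i)"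
    using cL z by (simp add: hom_mult hom_power subfield_power[OF L])
  also have "\<dots> = poly p (\<sigma> z)" using cF F_fixed by (simp add: poly_altdef)
  finally show ?thesis .
qed

lemma hom_coeff_prod_linear:
  assumes "finite Z" "Z \<subseteq> L"
  shows "coeff (\<Prod>z\<in>Z. [:- z, 1:]) k \<in> L \<and>
         \<sigma> (coeff (\<Prod>z\<in>Z. [:- z, 1:]) k) = coeff (\<Prod>z\<in>Z. [:- \<sigma> z, 1:]) k"
  using assms
proof (induction Z arbitrary: k rule: finite_induct)
  case empty
  show ?case by (auto simp: hom_0 hom_1 subfield_0[OF L] subfield_1[OF L])
next
  case (insert z Z)
  let ?P = "\<Prod>z\<in>Z. [:- z, 1:]" and ?Q = "\<Prod>z\<in>Z. [:- \<sigma> z, 1:]"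
  have coeff_step: "coeff ([:- w, 1:] * R) k = - w * coeff R k + (if k = 0 then 0 else coeff R (k - 1))"
    for w and R :: "'a poly" by (simp add: mult_pCons_left coeff_pCons split: nat.split)
  have z: "z \<in> L" and IH: "\<And>k. coeff ?P k \<in> L" "\<And>k. \<sigma> (coeff ?P k) = coeff ?Q k"
    using insert by auto
  have mem: "- z * coeff ?P k \<in> L" "(if k = 0 then 0 else coeff ?P (k - 1)) \<in> L"
    using z IH(1) by (auto intro: subfield_mult[OF L] subfield_uminus[OF L] subfield_0[OF L])
  have c1: "coeff (\<Prod>z\<in>insert z Z. [:- z, 1:]) k
      = - z * coeff ?P k + (if k = 0 then 0 else coeff ?P (k - 1))"
    unfolding prod.insert[OF insert(1,2)] by (rule coeff_step)
  have c2: "coeff (\<Prod>z\<in>insert z Z. [:- \<sigma> z, 1:]) k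
      = - \<sigma> z * coeff ?Q k + (if k = 0 then 0 else coeff ?Q (k - 1))"
    unfolding prod.insert[OF insert(1,2)] by (rule coeff_step)
  have e1: "\<sigma> (- z * coeff ?P k) = - \<sigma> z * coeff ?Q k"
    using hom_mult[OF subfield_uminus[OF L z] IH(1)] hom_uminus[OF z] IH(2) by simp
  have e2: "\<sigma> (if k = 0 then 0 else coeff ?P (k - 1)) = (if k = 0 then 0 else coeff ?Q (k - 1))"
    using IH(2) hom_0 by simp
  show ?case
    unfolding c1 c2 hom_add[OF mem] e1 e2 using subfield_add[OF L mem] by simp
qed

end

lemma field_auts_comp:
  assumes "\<sigma> \<in> field_auts L F" "\<tau> \<in> field_auts L F"
  shows "\<sigma> \<circ> \<tau> \<in> field_auts L F"
proof -
  have "\<tau> x \<in> L" if "x \<in> L" for x using assms(2) that by (auto simp: field_auts_def bij_betw_def)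
  then show ?thesis using assms unfolding field_auts_def by (auto intro: bij_betw_trans)
qed

lemma id_in_field_auts: "id \<in> field_auts L F"
  unfolding field_auts_def by auto

lemma finite_field_auts_orbit:
  assumes F: "is_subfield F" and L: "is_subfield L" and F_sub_L: "F \<subseteq> L"
    and B: "indexed_basis F L I b" and x: "x \<in> L"
  shows "finite ((\<lambda>\<sigma>. \<sigma> x) ` field_auts L F)"
proof -
  obtain q where q: "q \<noteq> 0" "\<forall>k. coeff q k \<in> F" "poly q x = 0"
    using indexed_basis_algebraic[OF F L B x] by blast
  have "poly q (\<sigma> x) = 0" if \<sigma>: "\<sigma> \<in> field_auts L F" for \<sigma>
    using hom_poly[OF L field_auts_ring_hom_on[OF \<sigma>] q(2) F_sub_L _ x] hom_0[OF L field_auts_ring_hom_on[OF \<sigma>]]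
      \<sigma> q(3) by (simp add: field_auts_def)
  then have "(\<lambda>\<sigma>. \<sigma> x) ` field_auts L F \<subseteq> {z. poly q z = 0}" by blast
  then show ?thesis using poly_roots_finite[OF q(1)] by (rule finite_subset)
qed

lemma orbit_poly_coeff_in_fixed_field:
  assumes L: "is_subfield L" and fin: "finite ((\<lambda>\<sigma>. \<sigma> x) ` field_auts L F)" and x: "x \<in> L"
    and fixed: "{x\<in>L. \<forall>\<sigma>\<in>field_auts L F. \<sigma> x = x} = F"
  shows "coeff (\<Prod>z\<in>(\<lambda>\<sigma>. \<sigma> x) ` field_auts L F. [:- z, 1:]) k \<in> F"
proof -
  let ?Orb = "(\<lambda>\<sigma>. \<sigma> x) ` field_auts L F"
  have Orb_L: "?Orb \<subseteq> L" using x by (auto simp: field_auts_def bij_betw_def)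
  have "\<sigma> (coeff (\<Prod>z\<in>?Orb. [:- z, 1:]) k) = coeff (\<Prod>z\<in>?Orb. [:- z, 1:]) k"
    if \<sigma>: "\<sigma> \<in> field_auts L F" for \<sigma>
  proof -
    have "\<sigma> ` ?Orb \<subseteq> ?Orb"
    proof
      fix w assume "w \<in> \<sigma> ` ?Orb"
      then obtain \<tau> where "\<tau> \<in> field_auts L F" "w = (\<sigma> \<circ> \<tau>) x" by auto
      then show "w \<in> ?Orb" using field_auts_comp[OF \<sigma>] by blast
    qed
    moreover have inj: "inj_on \<sigma> ?Orb"
      using hom_inj_on[OF L field_auts_ring_hom_on[OF \<sigma>]] Orb_L by (rule inj_on_subset)
    ultimately have "\<sigma> ` ?Orb = ?Orb" using fin by (simp add: card_image card_subset_eq)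
    then show ?thesis
      using hom_coeff_prod_linear[OF L field_auts_ring_hom_on[OF \<sigma>] fin Orb_L]
        prod.reindex[OF inj, of "\<lambda>w. [:- w, 1:]"] by simp
  qed
  moreover have "coeff (\<Prod>z\<in>?Orb. [:- z, 1:]) k \<in> L"
    using hom_coeff_prod_linear[OF L field_auts_ring_hom_on[OF id_in_field_auts] fin Orb_L] by blast
  ultimately show ?thesis using fixed by blast
qed

text \<open>Artin's argument: \<open>x\<close> is a root of \<open>\<Prod>(X - \<sigma> x)\<close>, the product over its finite orbit, whose
  coefficients lie in \<open>F\<close>; so every \<open>F\<close>-embedding maps \<open>x\<close> into the orbit.\<close>

lemma galois_ext_aut_maps_into:
  assumes F: "is_subfield F" and L: "is_subfield L" and K: "is_subfield K"
    and F_sub_L: "F \<subseteq> L" and L_sub_K: "L \<subseteq> K" and B: "indexed_basis F L I b"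
    and fixed: "{x\<in>L. \<forall>\<sigma>\<in>field_auts L F. \<sigma> x = x} = F"
    and g: "g \<in> field_auts K F" and x: "x \<in> L"
  shows "g x \<in> L"
proof -
  define Orb where "Orb = (\<lambda>\<sigma>. \<sigma> x) ` field_auts L F"
  define p where "p = (\<Prod>z\<in>Orb. [:- z, 1:])"
  have fin: "finite Orb" unfolding Orb_def by (rule finite_field_auts_orbit[OF F L F_sub_L B x])
  have Orb_L: "Orb \<subseteq> L" unfolding Orb_def using x by (auto simp: field_auts_def bij_betw_def)
  have x_Orb: "x \<in> Orb" unfolding Orb_def by (rule image_eqI[of _ _ id]) (simp_all add: id_in_field_auts)
  have "coeff p k \<in> F" for k
    unfolding p_def Orb_def using orbit_poly_coeff_in_fixed_field[OF L fin[unfolded Orb_def] x fixed] .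
  moreover have "F \<subseteq> K" "x \<in> K" "\<forall>a\<in>F. g a = a"
    using F_sub_L L_sub_K x g by (auto simp: field_auts_def)
  ultimately have "poly p (g x) = g (poly p x)"
    by (intro hom_poly[OF K field_auts_ring_hom_on[OF g], symmetric]) auto
  also have "poly p x = 0" unfolding p_def using fin x_Orb by (simp add: poly_prod)
  finally have "(\<Prod>z\<in>Orb. g x - z) = 0"
    using hom_0[OF K field_auts_ring_hom_on[OF g]] unfolding p_def by (simp add: poly_prod)
  then show ?thesis using fin Orb_L by auto
qed

lemma indexed_basis_image:
  assumes F: "is_subfield F" and L: "is_subfield L" and F_sub_L: "F \<subseteq> L"
    and hom: "ring_hom_on \<sigma> L" and \<sigma>L: "\<sigma> ` L = L" and \<sigma>F: "\<sigma> ` F = F"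
    and B: "indexed_basis F L I b"
  shows "indexed_basis F L I (\<sigma> \<circ> b)"
proof (rule indexed_basisI[OF F])
  have bL: "b i \<in> L" if "i \<in> I" for i using indexed_basisD(2)[OF B that] .
  have image_sum: "\<sigma> (\<Sum>i\<in>I. c i * b i) = (\<Sum>i\<in>I. \<sigma> (c i) * (\<sigma> \<circ> b) i)" if "\<forall>i\<in>I. c i \<in> F" for c
    using hom_lincomb[OF L hom, of I c b] that bL F_sub_L by auto
  show "finite I" using indexed_basisD(1)[OF B] .
  show "(\<sigma> \<circ> b) ` I \<subseteq> L" using bL \<sigma>L by auto
  show "spans F L I (\<sigma> \<circ> b)" unfolding spans_def
  proof
    fix w assume "w \<in> L"
    then obtain v where v: "v \<in> L" "w = \<sigma> v" using \<sigma>L by blast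
    let ?c = "indexed_coords F I b v"
    have "w = (\<Sum>i\<in>I. \<sigma> (?c i) * (\<sigma> \<circ> b) i)"
      using v image_sum indexed_coordsD(1,3)[OF B v(1)] by metis
    moreover have "\<forall>i\<in>I. \<sigma> (?c i) \<in> F" using indexed_coordsD(1)[OF B v(1)] \<sigma>F by blast
    ultimately show "\<exists>c. (\<forall>i\<in>I. c i \<in> F) \<and> w = (\<Sum>i\<in>I. c i * (\<sigma> \<circ> b) i)"
      by (intro exI[of _ "\<sigma> \<circ> ?c"]) auto
  qed
  show "lin_independent F I (\<sigma> \<circ> b)" unfolding lin_independent_def
  proof (intro allI impI ballI)
    fix c i assume c: "(\<forall>i\<in>I. c i \<in> F) \<and> (\<Sum>i\<in>I. c i * (\<sigma> \<circ> b) i) = 0" and i: "i \<in> I"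
    define d where "d i = inv_into F \<sigma> (c i)" for i
    have d: "d i \<in> F" "\<sigma> (d i) = c i" if "i \<in> I" for i
      using c that \<sigma>F by (auto simp: d_def inv_into_into f_inv_into_f)
    have "\<sigma> (\<Sum>i\<in>I. d i * b i) = \<sigma> 0"
      using c d image_sum[of d] hom_0[OF L hom] by simp
    then have "(\<Sum>i\<in>I. d i * b i) = 0"
      using inj_onD[OF hom_inj_on[OF L hom]] d(1) bL F_sub_L
      by (meson subset_iff subfield_0[OF L] subfield_mult[OF L] subfield_sum[OF L])
    then have "d i = 0" using lin_independentD[OF indexed_basis_lin_independent[OF F L B], of d] d(1) i by blast
    then show "c i = 0" using d(2)[OF i] hom_0[OF L hom] by simp
  qed
qed

lemma indexed_trace_image:
  assumes F: "is_subfield F" and L: "is_subfield L" and F_sub_L: "F \<subseteq> L"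
    and hom: "ring_hom_on \<sigma> L" and \<sigma>L: "\<sigma> ` L = L" and \<sigma>F: "\<sigma> ` F = F"
    and B: "indexed_basis F L I b" and x: "x \<in> L"
  shows "indexed_trace F I (\<sigma> \<circ> b) (\<sigma> x) = \<sigma> (indexed_trace F I b x)"
proof -
  have B': "indexed_basis F L I (\<sigma> \<circ> b)" by (rule indexed_basis_image[OF assms(1-7)])
  have bL: "b i \<in> L" if "i \<in> I" for i using indexed_basisD(2)[OF B that] .
  have coords: "indexed_coords F I (\<sigma> \<circ> b) (\<sigma> v) = \<sigma> \<circ> indexed_coords F I b v" if v: "v \<in> L" for v
  proof (rule indexed_coords_unique[OF B'])
    show "\<sigma> v \<in> L" using v \<sigma>L by blast
    show "(\<sigma> \<circ> indexed_coords F I b v) i \<in> F" if "i \<in> I" for i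
      using indexed_coordsD(1)[OF B v that] \<sigma>F by auto
    show "(\<sigma> \<circ> indexed_coords F I b v) i = 0" if "i \<notin> I" for i
      using indexed_coordsD(2)[OF B v that] hom_0[OF L hom] by simp
    have "\<sigma> v = \<sigma> (\<Sum>i\<in>I. indexed_coords F I b v i * b i)" using indexed_coordsD(3)[OF B v] by simp
    also have "\<dots> = (\<Sum>i\<in>I. (\<sigma> \<circ> indexed_coords F I b v) i * (\<sigma> \<circ> b) i)"
      using hom_lincomb[OF L hom, of I "indexed_coords F I b v" b] indexed_coordsD(1)[OF B v] bL F_sub_L
      by auto
    finally show "\<sigma> v = (\<Sum>i\<in>I. (\<sigma> \<circ> indexed_coords F I b v) i * (\<sigma> \<circ> b) i)" .
  qed
  have "indexed_trace F I (\<sigma> \<circ> b) (\<sigma> x) = (\<Sum>i\<in>I. \<sigma> (indexed_coords F I b (x * b i) i))"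
    unfolding indexed_trace_def
    using coords bL x by (auto simp: hom_mult[OF L hom, symmetric] subfield_mult[OF L] intro!: sum.cong)
  also have "\<dots> = \<sigma> (indexed_trace F I b x)"
    unfolding indexed_trace_def using indexed_coordsD(1)[OF B subfield_mult[OF L x bL]] F_sub_L
    by (auto intro!: hom_sum[OF L hom, symmetric])
  finally show ?thesis .
qed

lemma inv_into_field_auts:
  assumes g: "g \<in> field_auts L F" and L: "is_subfield L" and F_sub_L: "F \<subseteq> L"
  shows "inv_into L g \<in> field_auts L F"
proof -
  let ?h = "inv_into L g"
  have bij: "bij_betw g L L" and hom: "ring_hom_on g L" and F_fixed: "\<And>a. a \<in> F \<Longrightarrow> g a = a"
    using g field_auts_ring_hom_on[OF g] by (auto simp: field_auts_def)
  have h_bij: "bij_betw ?h L L" using bij_betw_inv_into[OF bij] .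
  have hL: "?h x \<in> L" if "x \<in> L" for x using h_bij that by (auto simp: bij_betw_def)
  have gh: "g (?h x) = x" if "x \<in> L" for x using bij that by (simp add: bij_betw_inv_into_right)
  have hg: "?h (g x) = x" if "x \<in> L" for x using bij that by (simp add: bij_betw_def)
  have "?h (x + y) = ?h x + ?h y \<and> ?h (x * y) = ?h x * ?h y" if "x \<in> L" "y \<in> L" for x y
    using hg[OF subfield_add[OF L hL hL]] hg[OF subfield_mult[OF L hL hL]]
      hom_add[OF L hom hL hL] hom_mult[OF L hom hL hL] gh that by simp
  moreover have "?h 1 = 1" using hg[OF subfield_1[OF L]] hom_1[OF L hom] by simp
  moreover have "?h a = a" if "a \<in> F" for a using hg[of a] F_fixed[OF that] F_sub_L that by auto
  ultimately show ?thesis using h_bij unfolding field_auts_def by auto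
qed

section \<open>The tower and its normalized traces\<close>

locale field_tower =
  fixes Kt :: "nat \<Rightarrow> 'a::field_char_0 set"
  assumes mono: "\<And>n. Kt n \<subseteq> Kt (Suc n)"
    and fin: "\<And>n. finite_ext (Kt 0) (Kt n)"
begin

abbreviation K where "K \<equiv> tower_union Kt"

abbreviation deg where "deg n \<nu> \<equiv> field_degree (Kt n) (Kt \<nu>)"

abbreviation tr where "tr n \<nu> \<equiv> field_trace (Kt n) (Kt \<nu>)"

lemma subfield_Kt: "is_subfield (Kt n)"
  using fin[of n] by (simp add: finite_ext_def)

lemma Kt_mono: "n \<le> \<nu> \<Longrightarrow> Kt n \<subseteq> Kt \<nu>"
  using lift_Suc_mono_le[of Kt, OF mono] by blast

lemma Kt_subset_K: "Kt n \<subseteq> K"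
  unfolding tower_union_def by auto

lemma K_memE:
  assumes "x \<in> K"
  obtains \<nu> where "m \<le> \<nu>" "x \<in> Kt \<nu>"
proof -
  obtain n where "x \<in> Kt n" using assms unfolding tower_union_def by auto
  then show ?thesis using that[of "max n m"] Kt_mono[of n "max n m"] by auto
qed

lemma subfield_K: "is_subfield K"
  unfolding is_subfield_def
proof (intro conjI ballI impI)
  show "0 \<in> K" "1 \<in> K" using Kt_subset_K[of 0] subfield_0[OF subfield_Kt] subfield_1[OF subfield_Kt] by auto
  fix x y assume "x \<in> K" "y \<in> K"
  then obtain \<nu> where "x \<in> Kt \<nu>" "y \<in> Kt \<nu>"
    by (metis K_memE Kt_mono nat_le_linear subsetD)
  then show "x + y \<in> K" "x - y \<in> K" "x * y \<in> K"
    using Kt_subset_K[of \<nu>] subfield_add[OF subfield_Kt] subfield_diff[OF subfield_Kt]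
      subfield_mult[OF subfield_Kt] by auto
next
  fix x assume "x \<in> K" "x \<noteq> 0"
  then obtain n where "x \<in> Kt n" by (auto elim: K_memE)
  then show "inverse x \<in> K" using Kt_subset_K[of n] subfield_inverse[OF subfield_Kt] by auto
qed

lemma indexed_basis_Kt:
  assumes "n \<le> \<nu>"
  obtains I and b :: "nat \<Rightarrow> 'a" where "indexed_basis (Kt n) (Kt \<nu>) I b"
proof -
  obtain bs where "is_basis (Kt 0) (Kt \<nu>) bs" using fin[of \<nu>] by (auto simp: finite_ext_def)
  then have B0: "indexed_basis (Kt 0) (Kt \<nu>) {..<length bs} ((!) bs)" by (simp add: is_basis_iff_indexed_basis)
  have "spans (Kt n) (Kt \<nu>) {..<length bs} ((!) bs)"
    unfolding spans_def using indexed_coordsD(1,3)[OF B0] Kt_mono[of 0 n] by blast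
  then show ?thesis
    using spans_imp_indexed_basis_subset[OF subfield_Kt, of "{..<length bs}" "(!) bs" "Kt \<nu>"]
      indexed_basisD[OF B0] that by blast
qed

lemma deg_tr_eq_indexed:
  assumes "n \<le> \<nu>" "indexed_basis (Kt n) (Kt \<nu>) I b"
  shows "deg n \<nu> = card I" "\<And>x. x \<in> Kt \<nu> \<Longrightarrow> tr n \<nu> x = indexed_trace (Kt n) I b x"
  using field_degree_trace_eq_indexed[OF subfield_Kt subfield_Kt Kt_mono[OF assms(1)] assms(2)] by auto

lemma deg_pos: "n \<le> \<nu> \<Longrightarrow> 0 < deg n \<nu>"
proof -
  assume n: "n \<le> \<nu>"
  then obtain I and b :: "nat \<Rightarrow> 'a" where B: "indexed_basis (Kt n) (Kt \<nu>) I b"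
    by (rule indexed_basis_Kt)
  have "I \<noteq> {}" using indexed_coordsD(3)[OF B subfield_1[OF subfield_Kt]] by auto
  then show ?thesis using deg_tr_eq_indexed(1)[OF n B] indexed_basisD(1)[OF B] by (simp add: card_gt_0_iff)
qed

lemma deg_mult_tr_tower:
  assumes "n \<le> \<mu>" "\<mu> \<le> \<nu>"
  shows "deg n \<nu> = deg n \<mu> * deg \<mu> \<nu>"
    and "\<And>x. x \<in> Kt \<mu> \<Longrightarrow> tr n \<nu> x = of_nat (deg \<mu> \<nu>) * tr n \<mu> x"
proof -
  obtain I and b :: "nat \<Rightarrow> 'a" where B: "indexed_basis (Kt n) (Kt \<mu>) I b"
    using assms(1) by (rule indexed_basis_Kt)
  obtain J and c :: "nat \<Rightarrow> 'a" where C: "indexed_basis (Kt \<mu>) (Kt \<nu>) J c"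
    using assms(2) by (rule indexed_basis_Kt)
  note tower = subfield_Kt subfield_Kt subfield_Kt Kt_mono[OF assms(1)] Kt_mono[OF assms(2)] B C
  have BC: "indexed_basis (Kt n) (Kt \<nu>) (I \<times> J) (\<lambda>(i, j). b i * c j)"
    by (rule indexed_basis_tower[OF tower])
  have n\<nu>: "n \<le> \<nu>" using assms by simp
  show "deg n \<nu> = deg n \<mu> * deg \<mu> \<nu>"
    using deg_tr_eq_indexed(1)[OF n\<nu> BC] deg_tr_eq_indexed(1)[OF assms(1) B]
      deg_tr_eq_indexed(1)[OF assms(2) C] by (simp add: card_cartesian_product)
  fix x assume x: "x \<in> Kt \<mu>"
  then show "tr n \<nu> x = of_nat (deg \<mu> \<nu>) * tr n \<mu> x"
    using deg_tr_eq_indexed(2)[OF n\<nu> BC] deg_tr_eq_indexed(2)[OF assms(1) B]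
      deg_tr_eq_indexed(1)[OF assms(2) C] indexed_trace_tower[OF tower x] Kt_mono[OF assms(2)] by auto
qed

lemma tr_linear:
  assumes "n \<le> \<nu>" "a \<in> Kt n" "x \<in> Kt \<nu>" "y \<in> Kt \<nu>"
  shows "tr n \<nu> (a * x + y) = a * tr n \<nu> x + tr n \<nu> y"
proof -
  obtain I and b :: "nat \<Rightarrow> 'a" where B: "indexed_basis (Kt n) (Kt \<nu>) I b"
    using assms(1) by (rule indexed_basis_Kt)
  have "a * x + y \<in> Kt \<nu>"
    using assms Kt_mono[OF assms(1)] by (auto intro: subfield_add[OF subfield_Kt] subfield_mult[OF subfield_Kt])
  then show ?thesis
    using deg_tr_eq_indexed(2)[OF assms(1) B] assms
      indexed_trace_linear[OF subfield_Kt subfield_Kt Kt_mono[OF assms(1)] B] by simp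
qed

lemma tr_in: "n \<le> \<nu> \<Longrightarrow> x \<in> Kt \<nu> \<Longrightarrow> tr n \<nu> x \<in> Kt n"
  by (metis deg_tr_eq_indexed(2) indexed_basis_Kt indexed_trace_in subfield_Kt)

lemma tr_mult: "n \<le> \<nu> \<Longrightarrow> a \<in> Kt n \<Longrightarrow> x \<in> Kt \<nu> \<Longrightarrow> tr n \<nu> (a * x) = a * tr n \<nu> x"
  and tr_diff: "n \<le> \<nu> \<Longrightarrow> x \<in> Kt \<nu> \<Longrightarrow> y \<in> Kt \<nu> \<Longrightarrow> tr n \<nu> (x - y) = tr n \<nu> x - tr n \<nu> y"
proof -
  have zero: "tr n \<nu> 0 = 0" if "n \<le> \<nu>"
    using tr_linear[OF that subfield_1[OF subfield_Kt] subfield_0[OF subfield_Kt] subfield_0[OF subfield_Kt]] by simp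
  show "n \<le> \<nu> \<Longrightarrow> a \<in> Kt n \<Longrightarrow> x \<in> Kt \<nu> \<Longrightarrow> tr n \<nu> (a * x) = a * tr n \<nu> x"
    using tr_linear[of n \<nu> a x 0] zero subfield_0[OF subfield_Kt] by simp
  show "n \<le> \<nu> \<Longrightarrow> x \<in> Kt \<nu> \<Longrightarrow> y \<in> Kt \<nu> \<Longrightarrow> tr n \<nu> (x - y) = tr n \<nu> x - tr n \<nu> y"
    using tr_linear[of n \<nu> "- 1" y x] subfield_uminus[OF subfield_Kt subfield_1[OF subfield_Kt]] by simp
qed

lemma tr_self: "x \<in> Kt n \<Longrightarrow> tr n n x = x" and deg_self: "deg n n = 1"
  using deg_tr_eq_indexed[OF order.refl indexed_basis_self(1)[OF subfield_Kt]]
    indexed_basis_self(2)[OF subfield_Kt] by auto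

lemma Tnu_indep:
  assumes "n \<le> \<mu>" "\<mu> \<le> \<nu>" "x \<in> Kt \<mu>"
  shows "Tnu Kt n \<nu> x = Tnu Kt n \<mu> x"
  unfolding Tnu_def using deg_mult_tr_tower(1)[of 0 \<mu> \<nu>] deg_mult_tr_tower(2)[OF assms] deg_pos[OF assms(2)] assms
  by simp

lemma Tnu_self: "x \<in> Kt n \<Longrightarrow> Tnu Kt n n x = x"
  unfolding Tnu_def using deg_pos[of 0 n] tr_self by simp

lemma Tnu_in: "n \<le> \<nu> \<Longrightarrow> x \<in> Kt \<nu> \<Longrightarrow> Tnu Kt n \<nu> x \<in> Kt n"
  unfolding Tnu_def
  by (intro subfield_mult[OF subfield_Kt] subfield_divide[OF subfield_Kt] subfield_of_nat[OF subfield_Kt] tr_in)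

lemma Tnu_mult: "n \<le> \<nu> \<Longrightarrow> a \<in> Kt n \<Longrightarrow> x \<in> Kt \<nu> \<Longrightarrow> Tnu Kt n \<nu> (a * x) = a * Tnu Kt n \<nu> x"
  unfolding Tnu_def by (simp add: tr_mult)

lemma Tnu_diff: "n \<le> \<nu> \<Longrightarrow> x \<in> Kt \<nu> \<Longrightarrow> y \<in> Kt \<nu> \<Longrightarrow> Tnu Kt n \<nu> (x - y) = Tnu Kt n \<nu> x - Tnu Kt n \<nu> y"
  unfolding Tnu_def by (simp add: tr_diff right_diff_distrib)

lemma Tnu_one:
  assumes "n \<le> \<nu>"
  shows "Tnu Kt n \<nu> 1 = 1"
proof -
  have "tr n \<nu> 1 = of_nat (deg n \<nu>)"
    using deg_mult_tr_tower(2)[of n n \<nu> 1] tr_self[of 1 n] subfield_1[OF subfield_Kt] assms by simp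
  then show ?thesis
    unfolding Tnu_def using deg_mult_tr_tower(1)[of 0 n \<nu>] deg_pos[of 0 n] deg_pos[OF assms] assms by simp
qed

lemma Tn_eq_Tnu:
  assumes "n \<le> \<nu>" "x \<in> Kt \<nu>"
  shows "Tn Kt n x = Tnu Kt n \<nu> x"
proof -
  let ?m = "LEAST \<mu>. n \<le> \<mu> \<and> x \<in> Kt \<mu>"
  have "n \<le> ?m \<and> x \<in> Kt ?m" by (rule LeastI[of _ \<nu>]) (use assms in simp)
  moreover have "?m \<le> \<nu>" by (rule Least_le) (use assms in simp)
  ultimately show ?thesis unfolding Tn_def using Tnu_indep[of n ?m \<nu> x] by simp
qed

end

section \<open>The space \<open>\<overline>K\<close> and the pairing\<close>

context field_tower
begin

definition level :: "'a \<Rightarrow> nat" where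
  "level \<xi> = (LEAST n. \<xi> \<in> Kt n)"

lemma level_in: "\<xi> \<in> K \<Longrightarrow> \<xi> \<in> Kt (level \<xi>)"
  unfolding level_def tower_union_def by (auto intro: LeastI)

lemma level_le: "\<xi> \<in> Kt n \<Longrightarrow> level \<xi> \<le> n"
  unfolding level_def by (rule Least_le)

lemma pairing_level: "pairing Kt \<xi> y = Tn Kt 0 (\<xi> * y (level \<xi>))"
  unfolding pairing_def level_def Let_def ..

lemma Kbar_in: "y \<in> Kbar Kt \<Longrightarrow> y n \<in> Kt n"
  unfolding Kbar_def by auto

lemma Kbar_Tnu: "y \<in> Kbar Kt \<Longrightarrow> n \<le> \<nu> \<Longrightarrow> y n = Tnu Kt n \<nu> (y \<nu>)"
  unfolding Kbar_def using Tnu_self by (cases "n = \<nu>") auto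

lemma embK_truncation:
  assumes y: "y \<in> Kbar Kt"
  shows "embK Kt (y N) = (\<lambda>n. if n \<le> N then y n else y N)"
proof
  fix n
  have yN: "y N \<in> Kt N" using Kbar_in[OF y] .
  show "embK Kt (y N) n = (if n \<le> N then y n else y N)"
  proof (cases "n \<le> N")
    case True
    then show ?thesis unfolding embK_def using Tn_eq_Tnu[OF True yN] Kbar_Tnu[OF y True] by simp
  next
    case False
    then have "y N \<in> Kt n" using yN Kt_mono[of N n] by auto
    then show ?thesis unfolding embK_def using Tn_eq_Tnu[of n n] Tnu_self False by simp
  qed
qed

lemma embK_truncation_in_Kbar:
  assumes y: "y \<in> Kbar Kt"
  shows "embK Kt (y N) \<in> Kbar Kt"
proof -
  have yN: "y N \<in> Kt n" if "N \<le> n" for n using Kbar_in[OF y] Kt_mono[OF that] by auto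
  have "(if n \<le> N then y n else y N) = Tnu Kt n \<nu> (if \<nu> \<le> N then y \<nu> else y N)" if "n < \<nu>" for n \<nu>
  proof (cases "\<nu> \<le> N")
    case True
    then show ?thesis using Kbar_Tnu[OF y, of n \<nu>] that by simp
  next
    case \<nu>: False
    show ?thesis
    proof (cases "n \<le> N")
      case True
      then show ?thesis using \<nu> Tnu_indep[of n N \<nu> "y N"] yN[of N] Kbar_Tnu[OF y True] by simp
    next
      case False
      then show ?thesis using \<nu> Tnu_indep[of n n \<nu> "y N"] yN[of n] Tnu_self[of "y N" n] that by simp
    qed
  qed
  then show ?thesis
    unfolding embK_truncation[OF y] Kbar_def using Kbar_in[OF y] yN by auto
qed

lemma pairing_in: "\<xi> \<in> K \<Longrightarrow> y \<in> Kbar Kt \<Longrightarrow> pairing Kt \<xi> y \<in> Kt 0"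
  unfolding pairing_level
  using Tn_eq_Tnu[of 0 "level \<xi>"] Tnu_in[of 0 "level \<xi>"] level_in Kbar_in
  by (simp add: subfield_mult[OF subfield_Kt])

lemma pairing_embK_truncation:
  "\<xi> \<in> K \<Longrightarrow> y \<in> Kbar Kt \<Longrightarrow> level \<xi> \<le> N \<Longrightarrow> pairing Kt \<xi> (embK Kt (y N)) = pairing Kt \<xi> y"
  unfolding pairing_level by (simp add: embK_truncation)

text \<open>Test with \<open>\<xi> = (y n - y' n)\<inverse>\<close> for an index \<open>n\<close> where \<open>y\<close> and \<open>y'\<close> differ.\<close>

lemma Kbar_eqI:
  assumes y: "y \<in> Kbar Kt" and y': "y' \<in> Kbar Kt"
    and eq: "\<And>\<xi>. \<xi> \<in> K \<Longrightarrow> pairing Kt \<xi> y = pairing Kt \<xi> y'"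
  shows "y = y'"
proof (rule ccontr)
  assume "y \<noteq> y'"
  then obtain n where "y n \<noteq> y' n" by auto
  define \<xi> where "\<xi> = inverse (y n - y' n)"
  let ?l = "level \<xi>"
  have d: "y n - y' n \<in> Kt n" using Kbar_in[OF y] Kbar_in[OF y'] subfield_diff[OF subfield_Kt] by blast
  have \<xi>n: "\<xi> \<in> Kt n" unfolding \<xi>_def using subfield_inverse[OF subfield_Kt d] .
  have \<xi>: "\<xi> \<in> K" "\<xi> \<in> Kt ?l" "?l \<le> n" using \<xi>n Kt_subset_K level_in level_le by auto
  have yl: "y ?l \<in> Kt ?l" "y' ?l \<in> Kt ?l" using Kbar_in y y' by auto
  have "\<xi> * y ?l - \<xi> * y' ?l = \<xi> * Tnu Kt ?l n (y n - y' n)"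
    using Kbar_Tnu[OF y \<xi>(3)] Kbar_Tnu[OF y' \<xi>(3)] Tnu_diff[OF \<xi>(3) Kbar_in[OF y] Kbar_in[OF y']]
    by (simp add: right_diff_distrib)
  also have "\<dots> = Tnu Kt ?l n 1"
    using Tnu_mult[OF \<xi>(3) \<xi>(2) d] \<open>y n \<noteq> y' n\<close> by (simp add: \<xi>_def)
  finally have one: "\<xi> * y ?l - \<xi> * y' ?l = 1" using Tnu_one[OF \<xi>(3)] by simp
  have "pairing Kt \<xi> y - pairing Kt \<xi> y' = Tnu Kt 0 ?l (\<xi> * y ?l - \<xi> * y' ?l)"
    unfolding pairing_level using Tn_eq_Tnu[of 0 ?l] Tnu_diff[of 0 ?l] \<xi>(2) yl
    by (simp add: subfield_mult[OF subfield_Kt])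
  then have "pairing Kt \<xi> y - pairing Kt \<xi> y' = 1" using one Tnu_one[of 0 ?l] by simp
  then show False using eq[OF \<xi>(1)] by simp
qed

end

section \<open>Galois towers\<close>

locale galois_tower = field_tower +
  assumes gal: "\<And>n. galois_ext (Kt 0) (Kt n)"
begin

lemma aut_maps_Kt:
  assumes g: "g \<in> field_auts K (Kt 0)" and x: "x \<in> Kt n"
  shows "g x \<in> Kt n"
proof -
  obtain I and b :: "nat \<Rightarrow> 'a" where "indexed_basis (Kt 0) (Kt n) I b"
    using indexed_basis_Kt[of 0 n] by blast
  then show ?thesis
    using galois_ext_aut_maps_into[OF subfield_Kt subfield_Kt subfield_K Kt_mono Kt_subset_K _ _ g x] gal[of n]
    by (simp add: galois_ext_def)
qed

lemma inv_aut: "g \<in> field_auts K (Kt 0) \<Longrightarrow> inv_into K g \<in> field_auts K (Kt 0)"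
  using inv_into_field_auts subfield_K Kt_subset_K by blast

lemma aut_inverse:
  assumes g: "g \<in> field_auts K (Kt 0)"
  shows "\<And>x. x \<in> K \<Longrightarrow> g (inv_into K g x) = x" "\<And>x. x \<in> K \<Longrightarrow> inv_into K g (g x) = x"
    and "\<And>x. x \<in> K \<Longrightarrow> g x \<in> K"
  using g by (auto simp: field_auts_def bij_betw_inv_into_right bij_betw_def)

lemma aut_image_Kt:
  assumes g: "g \<in> field_auts K (Kt 0)"
  shows "g ` Kt n = Kt n"
proof
  show "g ` Kt n \<subseteq> Kt n" using aut_maps_Kt[OF g] by blast
  show "Kt n \<subseteq> g ` Kt n"
  proof
    fix x assume x: "x \<in> Kt n"
    then have "inv_into K g x \<in> Kt n" "g (inv_into K g x) = x"
      using aut_maps_Kt[OF inv_aut[OF g] x] aut_inverse(1)[OF g] Kt_subset_K by auto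
    then show "x \<in> g ` Kt n" by (metis image_eqI)
  qed
qed

lemma Tnu_aut:
  assumes g: "g \<in> field_auts K (Kt 0)" and n: "n \<le> \<nu>" and x: "x \<in> Kt \<nu>"
  shows "g (Tnu Kt n \<nu> x) = Tnu Kt n \<nu> (g x)"
proof -
  obtain I and b :: "nat \<Rightarrow> 'a" where B: "indexed_basis (Kt n) (Kt \<nu>) I b"
    using n by (rule indexed_basis_Kt)
  have hom: "ring_hom_on g K" using field_auts_ring_hom_on[OF g] .
  note image = subfield_Kt subfield_Kt Kt_mono[OF n] ring_hom_on_subset[OF hom Kt_subset_K]
    aut_image_Kt[OF g] aut_image_Kt[OF g] B
  have tr: "tr n \<nu> (g x) = g (tr n \<nu> x)"
    using deg_tr_eq_indexed(2)[OF n indexed_basis_image[OF image]] deg_tr_eq_indexed(2)[OF n B]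
      indexed_trace_image[OF image x] aut_maps_Kt[OF g x] x by simp
  let ?r = "of_nat (deg 0 n) / of_nat (deg 0 \<nu>) :: 'a"
  have r: "?r \<in> Kt 0" by (intro subfield_divide[OF subfield_Kt] subfield_of_nat[OF subfield_Kt])
  have "g (?r * tr n \<nu> x) = g ?r * g (tr n \<nu> x)"
    using hom_mult[OF subfield_K hom] r tr_in[OF n x] Kt_subset_K by blast
  also have "g ?r = ?r" using g r by (auto simp: field_auts_def)
  finally show ?thesis unfolding Tnu_def tr .
qed

lemma Tn_aut:
  assumes g: "g \<in> field_auts K (Kt 0)" and x: "x \<in> K"
  shows "g (Tn Kt n x) = Tn Kt n (g x)"
proof -
  obtain \<nu> where "n \<le> \<nu>" "x \<in> Kt \<nu>" using x by (rule K_memE)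
  then show ?thesis using Tn_eq_Tnu Tnu_aut[OF g] aut_maps_Kt[OF g] by simp
qed

lemma Tn_0_aut:
  assumes g: "g \<in> field_auts K (Kt 0)" and x: "x \<in> K"
  shows "Tn Kt 0 (g x) = Tn Kt 0 x"
proof -
  obtain \<nu> where "x \<in> Kt \<nu>" using x by (rule K_memE)
  then have "Tn Kt 0 x \<in> Kt 0" using Tn_eq_Tnu[of 0 \<nu> x] Tnu_in[of 0 \<nu> x] by simp
  then show ?thesis using Tn_aut[OF g x, of 0] g by (simp add: field_auts_def)
qed

lemma comp_aut_in_Kbar:
  assumes g: "g \<in> field_auts K (Kt 0)" and y: "y \<in> Kbar Kt"
  shows "g \<circ> y \<in> Kbar Kt"
proof -
  have "g (y n) = Tnu Kt n \<nu> (g (y \<nu>))" if "n < \<nu>" for n \<nu>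
    using Kbar_Tnu[OF y, of n \<nu>] Tnu_aut[OF g _ Kbar_in[OF y], of n \<nu>] that by simp
  then show ?thesis unfolding Kbar_def using aut_maps_Kt[OF g Kbar_in[OF y]] by auto
qed

lemma comp_aut_embK:
  "g \<in> field_auts K (Kt 0) \<Longrightarrow> x \<in> K \<Longrightarrow> g \<circ> embK Kt x = embK Kt (g x)"
  unfolding embK_def using Tn_aut by auto

lemma pairing_comp_aut:
  assumes g: "g \<in> field_auts K (Kt 0)" and \<xi>: "\<xi> \<in> K" and y: "y \<in> Kbar Kt"
  shows "pairing Kt \<xi> (g \<circ> y) = pairing Kt (inv_into K g \<xi>) y"
proof -
  let ?\<eta> = "inv_into K g \<xi>"
  have \<eta>: "?\<eta> \<in> K" "g ?\<eta> = \<xi>" using aut_inverse[OF inv_aut[OF g]] aut_inverse[OF g] \<xi> by auto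
  have "?\<eta> \<in> Kt n \<longleftrightarrow> \<xi> \<in> Kt n" for n
    using aut_maps_Kt[OF g, of ?\<eta> n] aut_maps_Kt[OF inv_aut[OF g], of \<xi> n] \<eta> by auto
  then have lv: "level ?\<eta> = level \<xi>" unfolding level_def by simp
  have yl: "y (level \<xi>) \<in> K" using Kbar_in[OF y] Kt_subset_K by blast
  have "pairing Kt \<xi> (g \<circ> y) = Tn Kt 0 (g (?\<eta> * y (level \<xi>)))"
    unfolding pairing_level using hom_mult[OF subfield_K field_auts_ring_hom_on[OF g] \<eta>(1) yl] \<eta>(2) by simp
  also have "\<dots> = pairing Kt ?\<eta> y"
    unfolding pairing_level using Tn_0_aut[OF g subfield_mult[OF subfield_K \<eta>(1) yl]] lv by simp
  finally show ?thesis .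
qed

end

section \<open>The \<open>*\<close>-weak topology\<close>

lemma openin_abs_topology:
  "openin (abs_topology F av) U \<longleftrightarrow> U \<subseteq> F \<and> (\<forall>x\<in>U. \<exists>e>0. \<forall>y\<in>F. av (y - x) < e \<longrightarrow> y \<in> U)"
proof -
  have "istopology (\<lambda>U. U \<subseteq> F \<and> (\<forall>x\<in>U. \<exists>e>0. \<forall>y\<in>F. av (y - x) < e \<longrightarrow> y \<in> U))"
    unfolding istopology_def
  proof (rule conjI; intro allI impI)
    fix S T
    assume S: "S \<subseteq> F \<and> (\<forall>x\<in>S. \<exists>e>0. \<forall>y\<in>F. av (y - x) < e \<longrightarrow> y \<in> S)"
      and T: "T \<subseteq> F \<and> (\<forall>x\<in>T. \<exists>e>0. \<forall>y\<in>F. av (y - x) < e \<longrightarrow> y \<in> T)"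
    show "S \<inter> T \<subseteq> F \<and> (\<forall>x\<in>S \<inter> T. \<exists>e>0. \<forall>y\<in>F. av (y - x) < e \<longrightarrow> y \<in> S \<inter> T)"
    proof (intro conjI ballI)
      show "S \<inter> T \<subseteq> F" using S by blast
      fix x assume "x \<in> S \<inter> T"
      then obtain e1 e2 where "e1 > 0" "\<forall>y\<in>F. av (y - x) < e1 \<longrightarrow> y \<in> S"
        and "e2 > 0" "\<forall>y\<in>F. av (y - x) < e2 \<longrightarrow> y \<in> T"
        using S T by blast
      then show "\<exists>e>0. \<forall>y\<in>F. av (y - x) < e \<longrightarrow> y \<in> S \<inter> T"
        by (intro exI[of _ "min e1 e2"]) auto
    qed
  qed fast
  then show ?thesis unfolding abs_topology_def by (simp add: topology_inverse')
qed

lemma topspace_abs_topology: "topspace (abs_topology F av) = F"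
proof -
  have "openin (abs_topology F av) F" unfolding openin_abs_topology using zero_less_one by blast
  moreover have "U \<subseteq> F" if "openin (abs_topology F av) U" for U
    using that unfolding openin_abs_topology by blast
  ultimately show ?thesis unfolding topspace_def by blast
qed

lemma nonarch_absD:
  assumes "nonarch_abs F av" "x \<in> F"
  shows "0 \<le> av x" "av x = 0 \<longleftrightarrow> x = 0"
    and "y \<in> F \<Longrightarrow> av (x * y) = av x * av y" "y \<in> F \<Longrightarrow> av (x + y) \<le> max (av x) (av y)"
  using assms unfolding nonarch_abs_def by auto

lemma nonarch_abs_minus:
  assumes F: "is_subfield F" and av: "nonarch_abs F av" and x: "x \<in> F"
  shows "av (- x) = av x"
proof -
  have one: "1 \<in> F" and m1: "- 1 \<in> F" using subfield_1[OF F] subfield_uminus[OF F subfield_1[OF F]] by auto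
  have "av 1 = 1" using nonarch_absD(2)[OF av one] nonarch_absD(3)[OF av one one] by simp
  then have "av (- 1) * av (- 1) = 1" using nonarch_absD(3)[OF av m1 m1] by simp
  then have "(av (- 1) - 1) * (av (- 1) + 1) = 0" by (simp add: algebra_simps)
  then have "av (- 1) = 1" using nonarch_absD(1)[OF av m1] by auto
  then show ?thesis using nonarch_absD(3)[OF av m1 x] by simp
qed

lemma openin_abs_topology_ball:
  assumes F: "is_subfield F" and av: "nonarch_abs F av" and z: "z \<in> F"
  shows "openin (abs_topology F av) {w\<in>F. av (w - z) < r}"
  unfolding openin_abs_topology
proof (intro conjI ballI)
  fix w assume w: "w \<in> {w\<in>F. av (w - z) < r}"
  have "u \<in> {w\<in>F. av (w - z) < r}" if u: "u \<in> F" "av (u - w) < r" for u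
  proof -
    have "av (u - z) \<le> max (av (u - w)) (av (w - z))"
      using nonarch_absD(4)[OF av, of "u - w" "w - z"] u w z subfield_diff[OF F] by simp
    then show ?thesis using u w by (metis (mono_tags) le_less_trans max_less_iff_conj mem_Collect_eq)
  qed
  moreover have "0 < r" using w nonarch_absD(1)[OF av, of "w - z"] subfield_diff[OF F] z by force
  ultimately show "\<exists>e>0. \<forall>u\<in>F. av (u - w) < e \<longrightarrow> u \<in> {w\<in>F. av (w - z) < r}" by blast
qed auto

lemma Hausdorff_space_abs_topology:
  assumes F: "is_subfield F" and av: "nonarch_abs F av"
  shows "Hausdorff_space (abs_topology F av)"
  unfolding Hausdorff_space_def topspace_abs_topology
proof (intro allI impI)
  fix x y assume xy: "x \<in> F \<and> y \<in> F \<and> x \<noteq> y"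
  define r where "r = av (x - y)"
  have r: "0 < r" using nonarch_absD(1,2)[OF av subfield_diff[OF F, of x y]] xy by (force simp: r_def)
  define ball where "ball z = {w\<in>F. av (w - z) < r}" for z
  have "z \<in> ball z" if "z \<in> F" for z
    using that r nonarch_absD(2)[OF av subfield_0[OF F]] by (simp add: ball_def)
  moreover have "disjnt (ball x) (ball y)"
    unfolding disjnt_iff
  proof (intro allI notI)
    fix z assume z: "z \<in> ball x \<and> z \<in> ball y"
    have "av (x - z) < r"
      using nonarch_abs_minus[OF F av, of "z - x"] z xy subfield_diff[OF F] by (simp add: ball_def)
    moreover have "r \<le> max (av (x - z)) (av (z - y))"
      using nonarch_absD(4)[OF av, of "x - z" "z - y"] z xy subfield_diff[OF F] by (simp add: r_def ball_def)
    moreover have "av (z - y) < r" using z by (simp add: ball_def)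
    ultimately show False by simp
  qed
  ultimately show "\<exists>U V. openin (abs_topology F av) U \<and> openin (abs_topology F av) V \<and>
      x \<in> U \<and> y \<in> V \<and> disjnt U V"
    using xy openin_abs_topology_ball[OF F av] unfolding ball_def by blast
qed

lemma limitin_pullback_topology:
  assumes "y \<in> S" "eventually (\<lambda>n. z n \<in> S) F" "limitin T (\<lambda>n. \<phi> (z n)) (\<phi> y) F"
  shows "limitin (pullback_topology S \<phi> T) z y F"
  unfolding limitin_def
proof (intro conjI allI impI)
  show "y \<in> topspace (pullback_topology S \<phi> T)"
    using assms(1,3) unfolding topspace_pullback_topology limitin_def by auto
  fix U assume U: "openin (pullback_topology S \<phi> T) U \<and> y \<in> U"
  then obtain V where V: "openin T V" "U = \<phi> -` V \<inter> S" unfolding openin_pullback_topology by blast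
  then have "eventually (\<lambda>n. \<phi> (z n) \<in> V) F" using assms(3) U unfolding limitin_def by auto
  then show "eventually (\<lambda>n. z n \<in> U) F" using assms(2) V(2) by (auto elim: eventually_elim2)
qed

context field_tower
begin

lemma topspace_weak_star_topology: "topspace (weak_star_topology Kt av) = Kbar Kt"
  unfolding weak_star_topology_def topspace_pullback_topology topspace_product_topology
    topspace_abs_topology
  using pairing_in by auto

lemma continuous_map_pairing:
  assumes "\<xi> \<in> K"
  shows "continuous_map (weak_star_topology Kt av) (abs_topology (Kt 0) av) (pairing Kt \<xi>)"
proof -
  have "continuous_map (weak_star_topology Kt av) (abs_topology (Kt 0) av)
      ((\<lambda>f. f \<xi>) \<circ> (\<lambda>y. restrict (\<lambda>\<xi>. pairing Kt \<xi> y) K))"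
    unfolding weak_star_topology_def
    by (rule continuous_map_pullback[OF continuous_map_product_projection[OF assms]])
  moreover have "(\<lambda>f. f \<xi>) \<circ> (\<lambda>y. restrict (\<lambda>\<xi>. pairing Kt \<xi> y) K) = pairing Kt \<xi>"
    using assms by auto
  ultimately show ?thesis by simp
qed

lemma continuous_map_into_weak_star_topology:
  assumes "\<And>x. x \<in> topspace X \<Longrightarrow> h x \<in> Kbar Kt"
    and "\<And>\<xi>. \<xi> \<in> K \<Longrightarrow> continuous_map X (abs_topology (Kt 0) av) (\<lambda>x. pairing Kt \<xi> (h x))"
  shows "continuous_map X (weak_star_topology Kt av) h"
  unfolding weak_star_topology_def
  by (rule continuous_map_pullback') (use assms in \<open>auto simp: continuous_map_componentwise\<close>)

text \<open>\<open>K\<close> is sequentially dense: the truncations \<open>y N\<close> eventually have the same pairing with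
  each \<open>\<xi>\<close> as \<open>y\<close>.\<close>

lemma limitin_weak_star_truncation:
  assumes y: "y \<in> Kbar Kt"
  shows "limitin (weak_star_topology Kt av) (\<lambda>N. embK Kt (y N)) y sequentially"
  unfolding weak_star_topology_def
proof (rule limitin_pullback_topology)
  show "y \<in> Kbar Kt" by fact
  show "\<forall>\<^sub>F N in sequentially. embK Kt (y N) \<in> Kbar Kt" using embK_truncation_in_Kbar[OF y] by simp
  show "limitin (product_topology (\<lambda>_. abs_topology (Kt 0) av) K)
      (\<lambda>N. restrict (\<lambda>\<xi>. pairing Kt \<xi> (embK Kt (y N))) K) (restrict (\<lambda>\<xi>. pairing Kt \<xi> y) K) sequentially"
    unfolding limitin_componentwise
  proof (intro conjI ballI)
    show "\<forall>\<^sub>F N in sequentially. restrict (\<lambda>\<xi>. pairing Kt \<xi> (embK Kt (y N))) K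
        \<in> topspace (product_topology (\<lambda>_. abs_topology (Kt 0) av) K)"
      using pairing_in[OF _ embK_truncation_in_Kbar[OF y]]
      by (simp add: topspace_product_topology topspace_abs_topology)
    fix \<xi> assume \<xi>: "\<xi> \<in> K"
    have "\<forall>\<^sub>F N in sequentially. pairing Kt \<xi> (embK Kt (y N)) = pairing Kt \<xi> y"
      unfolding eventually_sequentially using pairing_embK_truncation[OF \<xi> y] by blast
    then show "limitin (abs_topology (Kt 0) av) (\<lambda>N. restrict (\<lambda>\<xi>. pairing Kt \<xi> (embK Kt (y N))) K \<xi>)
        (restrict (\<lambda>\<xi>. pairing Kt \<xi> y) K \<xi>) sequentially"
      using \<xi> pairing_in[OF \<xi> y] by (simp add: limitin_eventually topspace_abs_topology)
  qed simp
qed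

lemma Hausdorff_space_weak_star_topology:
  assumes "Hausdorff_space (abs_topology (Kt 0) av)"
  shows "Hausdorff_space (weak_star_topology Kt av)"
proof (rule Hausdorff_space_injective_preimage)
  let ?\<phi> = "\<lambda>y. restrict (\<lambda>\<xi>. pairing Kt \<xi> y) K"
  show "Hausdorff_space (product_topology (\<lambda>_. abs_topology (Kt 0) av) K)"
    using assms by (simp add: Hausdorff_space_product_topology)
  show "continuous_map (weak_star_topology Kt av) (product_topology (\<lambda>_. abs_topology (Kt 0) av) K) ?\<phi>"
    unfolding weak_star_topology_def using continuous_map_pullback[OF continuous_map_id] by simp
  show "inj_on ?\<phi> (topspace (weak_star_topology Kt av))"
    unfolding topspace_weak_star_topology
  proof (rule inj_onI)
    fix y y' assume "y \<in> Kbar Kt" "y' \<in> Kbar Kt" and eq: "?\<phi> y = ?\<phi> y'"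
    show "y = y'"
    proof (rule Kbar_eqI[OF \<open>y \<in> Kbar Kt\<close> \<open>y' \<in> Kbar Kt\<close>])
      fix \<xi> assume "\<xi> \<in> K"
      then show "pairing Kt \<xi> y = pairing Kt \<xi> y'" using fun_cong[OF eq, of \<xi>] by simp
    qed
  qed
qed

lemma weak_star_continuous_eq_on_Kbar:
  assumes "Hausdorff_space (abs_topology (Kt 0) av)"
    and F: "continuous_map (weak_star_topology Kt av) (weak_star_topology Kt av) F"
    and G: "continuous_map (weak_star_topology Kt av) (weak_star_topology Kt av) G"
    and eq: "\<And>x. x \<in> K \<Longrightarrow> F (embK Kt x) = G (embK Kt x)"
    and y: "y \<in> Kbar Kt"
  shows "F y = G y"
proof -
  let ?z = "\<lambda>N. embK Kt (y N)"
  have "y N \<in> K" for N using Kbar_in[OF y] Kt_subset_K by blast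
  then have "F \<circ> ?z = G \<circ> ?z" by (simp add: fun_eq_iff eq)
  have "limitin (weak_star_topology Kt av) (F \<circ> ?z) (F y) sequentially"
    using continuous_map_limit[OF F limitin_weak_star_truncation[OF y]] .
  moreover have "limitin (weak_star_topology Kt av) (F \<circ> ?z) (G y) sequentially"
    using continuous_map_limit[OF G limitin_weak_star_truncation[OF y]] \<open>F \<circ> ?z = G \<circ> ?z\<close> by simp
  ultimately show ?thesis
    by (rule limitin_Hausdorff_unique[OF _ _ trivial_limit_sequentially
          Hausdorff_space_weak_star_topology[OF assms(1)]])
qed

end

lemma (in galois_tower) continuous_map_comp_aut:
  assumes g: "g \<in> field_auts K (Kt 0)"
  shows "continuous_map (weak_star_topology Kt av) (weak_star_topology Kt av) ((\<circ>) g)"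
proof (rule continuous_map_into_weak_star_topology)
  show "g \<circ> y \<in> Kbar Kt" if "y \<in> topspace (weak_star_topology Kt av)" for y
    using comp_aut_in_Kbar[OF g] that by (simp add: topspace_weak_star_topology)
  fix \<xi> assume "\<xi> \<in> K"
  then have "inv_into K g \<xi> \<in> K" using aut_inverse(3)[OF inv_aut[OF g]] by blast
  then show "continuous_map (weak_star_topology Kt av) (abs_topology (Kt 0) av) (\<lambda>y. pairing Kt \<xi> (g \<circ> y))"
    by (rule continuous_map_eq[OF continuous_map_pairing])
      (simp add: pairing_comp_aut[OF g \<open>\<xi> \<in> K\<close>] topspace_weak_star_topology)
qed

theorem proposition2:
  fixes Kt :: "nat \<Rightarrow> 'a::field_char_0 set"
    and av :: "'a \<Rightarrow> real"
  assumes local: "nonarch_local_field (Kt 0) av"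
    and mono: "\<And>n. Kt n \<subseteq> Kt (Suc n)"
    and fin: "\<And>n. finite_ext (Kt 0) (Kt n)"
    and gal: "\<And>n. galois_ext (Kt 0) (Kt n)"
  shows "\<exists>E :: ('a \<Rightarrow> 'a) \<Rightarrow> (nat \<Rightarrow> 'a) \<Rightarrow> (nat \<Rightarrow> 'a).
     (\<forall>g \<in> field_auts (tower_union Kt) (Kt 0).
        continuous_map (weak_star_topology Kt av) (weak_star_topology Kt av) (E g) \<and>
        (\<forall>x \<in> tower_union Kt. E g (embK Kt x) = embK Kt (g x))) \<and>
     (\<forall>g \<in> field_auts (tower_union Kt) (Kt 0). \<forall>F.
        continuous_map (weak_star_topology Kt av) (weak_star_topology Kt av) F \<and>
        (\<forall>x \<in> tower_union Kt. F (embK Kt x) = embK Kt (g x)) \<longrightarrow>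
        (\<forall>y \<in> Kbar Kt. F y = E g y)) \<and>
     (\<forall>y \<in> Kbar Kt. E id y = y) \<and>
     (\<forall>g \<in> field_auts (tower_union Kt) (Kt 0). \<forall>h \<in> field_auts (tower_union Kt) (Kt 0).
        \<forall>y \<in> Kbar Kt. E (g \<circ> h) y = E g (E h y))"
proof -
  interpret galois_tower Kt using mono fin gal by unfold_locales
  have Hausdorff: "Hausdorff_space (abs_topology (Kt 0) av)"
    using local unfolding nonarch_local_field_def by (blast intro: Hausdorff_space_abs_topology)
  show ?thesis
  proof (intro exI[of _ "(\<circ>)"] conjI ballI allI impI)
    fix g assume g: "g \<in> field_auts K (Kt 0)"
    show "continuous_map (weak_star_topology Kt av) (weak_star_topology Kt av) ((\<circ>) g)"
      by (rule continuous_map_comp_aut[OF g])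
    show "g \<circ> embK Kt x = embK Kt (g x)" if "x \<in> K" for x by (rule comp_aut_embK[OF g that])
    fix F y
    assume F: "continuous_map (weak_star_topology Kt av) (weak_star_topology Kt av) F \<and>
      (\<forall>x\<in>K. F (embK Kt x) = embK Kt (g x))" and y: "y \<in> Kbar Kt"
    show "F y = g \<circ> y"
      by (rule weak_star_continuous_eq_on_Kbar[OF Hausdorff _ continuous_map_comp_aut[OF g] _ y])
        (use F comp_aut_embK[OF g] in auto)
  qed (simp_all add: comp_assoc)
qed

end
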